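(* Let $p$ be a prime, $X$ a countable set, and let $K,L\subseteq\mathbb{Q}_p(X)$ be $\tau$-closed sub-$\mathbb{Z}_p$-modules. Then: (a) $K=K^{\perp\perp}$; (b) if $K\subseteq L$ then $L^\perp\subseteq K^\perp$; (c) $(K+L)^\perp=K^\perp\cap L^\perp$; (d) $(K\cap L)^\perp$ equals the $\tau$-closure of $K^\perp+L^\perp$.
   Context: $\mathbb{Q}_p(X)$ is the set of maps $\xi:X\to\mathbb{Q}_p$ with $|\xi(i)|_p\le1$ for all but finitely many $i$, a $\mathbb{Z}_p$-module under coordinatewise operations, with the topology $\tau$ in which $A\subseteq\mathbb{Q}_p(X)$ is open iff for every finite $P\subseteq X$ the set $A\cap\big(\prod_{i\in P}\mathbb{Q}_p\times\prod_{j\in X\setminus P}\mathbb{Z}_p\big)$ is open in the product topology. The pairing is $\langle\xi,\eta\rangle=\iota\big(\sum_{i\in X}(\xi(i)\eta(i)+\mathbb{Z}_p)\big)\in S^1$, where $\iota:\mathbb{Q}_p/\mathbb{Z}_p\cong\mathbb{Z}[1/p]/\mathbb{Z}\hookrightarrow\mathbb{R}/\mathbb{Z}\cong S^1$ is the canonical embedding. For $K\subseteq\mathbb{Q}_p(X)$, $K^\perp=\{\xi\in\mathbb{Q}_p(X):\langle\xi,\eta\rangle=1\ \forall\eta\in K\}$ (the neutral element of $S^1$; written $0$ when $S^1\cong\mathbb{R}/\mathbb{Z}$). *)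

theory Defs
  imports Complex_Main "HOL-Library.Countable_Set" "HOL-Computational_Algebra.Primes"
begin

text \<open>An element x of Q_p is represented by the sequence of its canonical
representatives x_n of x modulo p^n Z_p, where x_n is the unique element of
Z[1/p] with 0 <= x_n < p^n and x - x_n in p^n Z_p (i.e. the partial sums of
the p-adic digit expansion of x, digits of exponent below n).  So x_0 is the
class of x in Q_p/Z_p = Z[1/p]/Z, and x lies in Z_p iff x_0 = 0.\<close>

definition rmod :: "rat \<Rightarrow> rat \<Rightarrow> rat" where
  "rmod r m = r - m * of_int (floor (r / m))"

definition Qp :: "nat \<Rightarrow> (nat \<Rightarrow> rat) set" where
  "Qp p = {x. (\<exists>k. \<forall>n. of_nat p ^ k * x n \<in> \<int>)
              \<and> (\<forall>n. 0 \<le> x n \<and> x n < of_nat p ^ n)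
              \<and> (\<forall>n. rmod (x (Suc n)) (of_nat p ^ n) = x n)}"

definition Zp :: "nat \<Rightarrow> (nat \<Rightarrow> rat) set" where
  "Zp p = {x \<in> Qp p. x 0 = 0}"

definition qp_zero :: "nat \<Rightarrow> rat" where
  "qp_zero = (\<lambda>n. 0)"

definition qp_add :: "nat \<Rightarrow> (nat \<Rightarrow> rat) \<Rightarrow> (nat \<Rightarrow> rat) \<Rightarrow> (nat \<Rightarrow> rat)" where
  "qp_add p x y = (\<lambda>n. rmod (x n + y n) (of_nat p ^ n))"

definition qp_den :: "nat \<Rightarrow> (nat \<Rightarrow> rat) \<Rightarrow> nat" where
  "qp_den p x = (LEAST k. \<forall>n. of_nat p ^ k * x n \<in> \<int>)"

definition qp_smult :: "nat \<Rightarrow> (nat \<Rightarrow> rat) \<Rightarrow> (nat \<Rightarrow> rat) \<Rightarrow> (nat \<Rightarrow> rat)" where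
  "qp_smult p a x = (\<lambda>n. rmod (a (n + qp_den p x) * x n) (of_nat p ^ n))"

text \<open>the class of the product x*y in Q_p/Z_p = Z[1/p]/Z, as a rational in [0,1)\<close>
definition qp_prod_frac :: "nat \<Rightarrow> (nat \<Rightarrow> rat) \<Rightarrow> (nat \<Rightarrow> rat) \<Rightarrow> rat" where
  "qp_prod_frac p x y =
     (let m = max (qp_den p x) (qp_den p y) in frac (x m * y m))"

definition QpX :: "nat \<Rightarrow> 'a set \<Rightarrow> ('a \<Rightarrow> nat \<Rightarrow> rat) set" where
  "QpX p X = {\<xi>. (\<forall>i\<in>X. \<xi> i \<in> Qp p) \<and> (\<forall>i. i \<notin> X \<longrightarrow> \<xi> i = qp_zero)
                 \<and> finite {i \<in> X. \<xi> i \<notin> Zp p}}"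

definition QpX_zero :: "'a \<Rightarrow> nat \<Rightarrow> rat" where
  "QpX_zero = (\<lambda>i. qp_zero)"

definition QpX_add :: "nat \<Rightarrow> ('a \<Rightarrow> nat \<Rightarrow> rat) \<Rightarrow> ('a \<Rightarrow> nat \<Rightarrow> rat) \<Rightarrow> ('a \<Rightarrow> nat \<Rightarrow> rat)" where
  "QpX_add p \<xi> \<eta> = (\<lambda>i. qp_add p (\<xi> i) (\<eta> i))"

definition QpX_smult :: "nat \<Rightarrow> (nat \<Rightarrow> rat) \<Rightarrow> ('a \<Rightarrow> nat \<Rightarrow> rat) \<Rightarrow> ('a \<Rightarrow> nat \<Rightarrow> rat)" where
  "QpX_smult p a \<xi> = (\<lambda>i. qp_smult p a (\<xi> i))"

definition submodule :: "nat \<Rightarrow> 'a set \<Rightarrow> ('a \<Rightarrow> nat \<Rightarrow> rat) set \<Rightarrow> bool" where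
  "submodule p X K \<longleftrightarrow> K \<subseteq> QpX p X \<and> QpX_zero \<in> K
     \<and> (\<forall>\<xi>\<in>K. \<forall>\<eta>\<in>K. QpX_add p \<xi> \<eta> \<in> K)
     \<and> (\<forall>a\<in>Zp p. \<forall>\<xi>\<in>K. QpX_smult p a \<xi> \<in> K)"

definition setsum_QpX :: "nat \<Rightarrow> ('a \<Rightarrow> nat \<Rightarrow> rat) set \<Rightarrow> ('a \<Rightarrow> nat \<Rightarrow> rat) set \<Rightarrow> ('a \<Rightarrow> nat \<Rightarrow> rat) set" where
  "setsum_QpX p K L = {QpX_add p \<xi> \<eta> | \<xi> \<eta>. \<xi> \<in> K \<and> \<eta> \<in> L}"

definition box :: "nat \<Rightarrow> 'a set \<Rightarrow> 'a set \<Rightarrow> ('a \<Rightarrow> nat \<Rightarrow> rat) set" where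
  "box p X P = {\<xi> \<in> QpX p X. \<forall>j \<in> X - P. \<xi> j \<in> Zp p}"

text \<open>A is tau-open iff for every finite P <= X, A \<inter> Box_P is open in the
product topology of Box_P.  The sets {y. y_n = x_n} are exactly the p-adic
balls x + p^n Z_p, so basic product neighbourhoods of xi in Box_P are
{eta in Box_P. eta i n = xi i n for i in F} with F finite.\<close>
definition tau_open :: "nat \<Rightarrow> 'a set \<Rightarrow> ('a \<Rightarrow> nat \<Rightarrow> rat) set \<Rightarrow> bool" where
  "tau_open p X A \<longleftrightarrow> A \<subseteq> QpX p X \<and>
     (\<forall>P. finite P \<and> P \<subseteq> X \<longrightarrow>
        (\<forall>\<xi> \<in> A \<inter> box p X P. \<exists>F n. finite F \<and> F \<subseteq> X \<and>
            {\<eta> \<in> box p X P. \<forall>i\<in>F. \<eta> i n = \<xi> i n} \<subseteq> A))"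

definition tau_closed :: "nat \<Rightarrow> 'a set \<Rightarrow> ('a \<Rightarrow> nat \<Rightarrow> rat) set \<Rightarrow> bool" where
  "tau_closed p X C \<longleftrightarrow> C \<subseteq> QpX p X \<and> tau_open p X (QpX p X - C)"

definition tau_closure :: "nat \<Rightarrow> 'a set \<Rightarrow> ('a \<Rightarrow> nat \<Rightarrow> rat) set \<Rightarrow> ('a \<Rightarrow> nat \<Rightarrow> rat) set" where
  "tau_closure p X S = \<Inter>{C. tau_closed p X C \<and> S \<subseteq> C}"

text \<open>pairing into S^1 = unit circle in C, via iota: Z[1/p]/Z -> R/Z -> S^1,
t |-> exp(2 pi i t).  Only finitely many summands are nonzero.\<close>
definition pairing :: "nat \<Rightarrow> 'a set \<Rightarrow> ('a \<Rightarrow> nat \<Rightarrow> rat) \<Rightarrow> ('a \<Rightarrow> nat \<Rightarrow> rat) \<Rightarrow> complex" where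
  "pairing p X \<xi> \<eta> = cis (2 * pi * real_of_rat
      (\<Sum>i \<in> {i \<in> X. \<xi> i \<notin> Zp p \<or> \<eta> i \<notin> Zp p}. qp_prod_frac p (\<xi> i) (\<eta> i)))"

definition perp :: "nat \<Rightarrow> 'a set \<Rightarrow> ('a \<Rightarrow> nat \<Rightarrow> rat) set \<Rightarrow> ('a \<Rightarrow> nat \<Rightarrow> rat) set" where
  "perp p X K = {\<xi> \<in> QpX p X. \<forall>\<eta> \<in> K. pairing p X \<xi> \<eta> = 1}"

end

(*
  Everything rests on separating a point from a closed set by a character.  If xi lies outside a
  tau-closed set C, then for some finite F and level n the truncation of xi (its coordinates modulo
  p^n Z_p on F and modulo Z_p elsewhere) differs from the truncations of all points of C.  These
  truncations live in Q^X modulo a lattice, a torsion group, in which the truncations of an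
  additively closed S generate, together with the lattice, a subgroup T avoiding the truncation of
  xi.  A Q/Z-valued character trivial on T but not on the truncation of xi is extended, by
  injectivity of Q/Z and countability of X, to all points e_i / p^m, and such a character is
  pairing with a vector eta of Q_p(X).  So eta annihilates S but not xi.  For S = K this gives
  K = K^perp^perp; for S = K^perp + L^perp, together with (c) and the closedness of annihilators,
  it gives (d).
*)
theory Submission
  imports Defs "HOL-Library.Function_Algebras"
begin

section \<open>Characters with values in \<open>\<rat>/\<int>\<close>\<close>

lemma of_int_fun_apply [simp]: "(of_int a :: 'b \<Rightarrow> 'c::ring_1) x = of_int a"
  by (induction a rule: int_induct[where k = 0]) (simp_all add: algebra_simps)

definition Ints_cong :: "rat \<Rightarrow> rat \<Rightarrow> bool" (infix \<open>\<approx>\<^sub>\<int>\<close> 50) where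
  "a \<approx>\<^sub>\<int> b \<longleftrightarrow> a - b \<in> \<int>"

lemma Ints_cong_refl [simp]: "a \<approx>\<^sub>\<int> a"
  by (simp add: Ints_cong_def)

lemma Ints_cong_sym: "a \<approx>\<^sub>\<int> b \<Longrightarrow> b \<approx>\<^sub>\<int> a"
  unfolding Ints_cong_def using Ints_minus[of "a - b"] by simp

lemma Ints_cong_trans [trans]: "a \<approx>\<^sub>\<int> b \<Longrightarrow> b \<approx>\<^sub>\<int> c \<Longrightarrow> a \<approx>\<^sub>\<int> c"
  unfolding Ints_cong_def using Ints_add[of "a - b" "b - c"] by simp

lemma Ints_cong_add: "a \<approx>\<^sub>\<int> b \<Longrightarrow> c \<approx>\<^sub>\<int> d \<Longrightarrow> a + c \<approx>\<^sub>\<int> b + d"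
  unfolding Ints_cong_def using Ints_add[of "a - b" "c - d"] by (simp add: add_diff_add)

lemma Ints_cong_diff: "a \<approx>\<^sub>\<int> b \<Longrightarrow> c \<approx>\<^sub>\<int> d \<Longrightarrow> a - c \<approx>\<^sub>\<int> b - d"
  unfolding Ints_cong_def using Ints_diff[of "a - b" "c - d"] by (simp add: diff_diff_eq2 algebra_simps)

lemma Ints_cong_mult_left: "a \<approx>\<^sub>\<int> b \<Longrightarrow> k \<in> \<int> \<Longrightarrow> k * a \<approx>\<^sub>\<int> k * b"
  unfolding Ints_cong_def using Ints_mult[of k "a - b"] by (simp add: right_diff_distrib)

lemma Ints_cong_0_iff [simp]: "a \<approx>\<^sub>\<int> 0 \<longleftrightarrow> a \<in> \<int>"
  by (simp add: Ints_cong_def)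

lemma Ints_cong_Ints_iff: "a \<approx>\<^sub>\<int> b \<Longrightarrow> a \<in> \<int> \<longleftrightarrow> b \<in> \<int>"
  by (metis Ints_cong_0_iff Ints_cong_sym Ints_cong_trans)

lemma Ints_cong_sum:
  "(\<And>i. i \<in> J \<Longrightarrow> f i \<approx>\<^sub>\<int> g i) \<Longrightarrow> sum f J \<approx>\<^sub>\<int> sum g J"
  by (induction J rule: infinite_finite_induct) (auto intro: Ints_cong_add)

lemma frac_Ints_cong: "frac a \<approx>\<^sub>\<int> a"
  by (simp add: Ints_cong_def frac_def)

definition add_subgroup :: "'g::ab_group_add set \<Rightarrow> bool" where
  "add_subgroup H \<longleftrightarrow> 0 \<in> H \<and> (\<forall>x\<in>H. \<forall>y\<in>H. x + y \<in> H) \<and> (\<forall>x\<in>H. - x \<in> H)"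

text \<open>A character of \<open>H\<close> with values in \<open>\<rat>/\<int>\<close>, each value represented by a rational lift.\<close>
definition character :: "'g::ab_group_add set \<Rightarrow> ('g \<Rightarrow> rat) \<Rightarrow> bool" where
  "character H \<chi> \<longleftrightarrow> (\<forall>x\<in>H. \<forall>y\<in>H. \<chi> (x + y) \<approx>\<^sub>\<int> \<chi> x + \<chi> y)"

lemma add_subgroup_zero: "add_subgroup H \<Longrightarrow> 0 \<in> H"
  and add_subgroup_add: "add_subgroup H \<Longrightarrow> x \<in> H \<Longrightarrow> y \<in> H \<Longrightarrow> x + y \<in> H"
  and add_subgroup_minus: "add_subgroup H \<Longrightarrow> x \<in> H \<Longrightarrow> - x \<in> H"
  by (simp_all add: add_subgroup_def)

lemma add_subgroup_diff: "add_subgroup H \<Longrightarrow> x \<in> H \<Longrightarrow> y \<in> H \<Longrightarrow> x - y \<in> H"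
  by (metis add_subgroup_add add_subgroup_minus diff_conv_add_uminus)

lemma add_subgroup_of_int_mult:
  fixes x :: "'g::ring_1"
  assumes "add_subgroup H" "x \<in> H"
  shows "of_int a * x \<in> H"
  by (induction a rule: int_induct[where k = 0])
    (use assms in \<open>simp_all add: add_subgroup_zero add_subgroup_add add_subgroup_diff algebra_simps\<close>)

lemma add_subgroup_sum: "add_subgroup H \<Longrightarrow> (\<And>i. i \<in> J \<Longrightarrow> f i \<in> H) \<Longrightarrow> sum f J \<in> H"
  by (induction J rule: infinite_finite_induct) (auto simp: add_subgroup_zero add_subgroup_add)

lemma character_add: "character H \<chi> \<Longrightarrow> x \<in> H \<Longrightarrow> y \<in> H \<Longrightarrow> \<chi> (x + y) \<approx>\<^sub>\<int> \<chi> x + \<chi> y"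
  by (simp add: character_def)

lemma character_zero:
  assumes "add_subgroup H" "character H \<chi>"
  shows "\<chi> 0 \<approx>\<^sub>\<int> 0"
proof -
  have "\<chi> 0 \<approx>\<^sub>\<int> \<chi> 0 + \<chi> 0"
    using character_add[OF assms(2) add_subgroup_zero add_subgroup_zero] assms(1) by simp
  then have "\<chi> 0 - \<chi> 0 \<approx>\<^sub>\<int> \<chi> 0 + \<chi> 0 - \<chi> 0"
    by (rule Ints_cong_diff) simp
  then have "0 \<approx>\<^sub>\<int> \<chi> 0"
    by simp
  then show ?thesis
    by (rule Ints_cong_sym)
qed

lemma character_diff:
  assumes "add_subgroup H" "character H \<chi>" "x \<in> H" "y \<in> H"
  shows "\<chi> (x - y) \<approx>\<^sub>\<int> \<chi> x - \<chi> y"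
proof -
  have "\<chi> x \<approx>\<^sub>\<int> \<chi> (x - y) + \<chi> y"
    using character_add[OF assms(2) add_subgroup_diff[OF assms(1,3,4)] assms(4)] by simp
  then have "\<chi> x - \<chi> y \<approx>\<^sub>\<int> \<chi> (x - y) + \<chi> y - \<chi> y"
    by (rule Ints_cong_diff) simp
  then have "\<chi> x - \<chi> y \<approx>\<^sub>\<int> \<chi> (x - y)"
    by simp
  then show ?thesis
    by (rule Ints_cong_sym)
qed

lemma character_of_int_mult:
  fixes x :: "'g::ring_1"
  assumes H: "add_subgroup H" and \<chi>: "character H \<chi>" and x: "x \<in> H"
  shows "\<chi> (of_int a * x) \<approx>\<^sub>\<int> of_int a * \<chi> x"
proof (induction a rule: int_induct[where k = 0])
  case base
  show ?case
    using character_zero[OF H \<chi>] by simp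
next
  case (step1 i)
  have "\<chi> (of_int (i + 1) * x) = \<chi> (of_int i * x + x)"
    by (simp add: algebra_simps)
  also have "\<dots> \<approx>\<^sub>\<int> \<chi> (of_int i * x) + \<chi> x"
    using character_add[OF \<chi> add_subgroup_of_int_mult[OF H x] x] .
  also have "\<dots> \<approx>\<^sub>\<int> of_int i * \<chi> x + \<chi> x"
    using step1.IH by (rule Ints_cong_add) simp
  finally show ?case
    by (simp add: algebra_simps)
next
  case (step2 i)
  have "\<chi> (of_int (i - 1) * x) = \<chi> (of_int i * x - x)"
    by (simp add: algebra_simps)
  also have "\<dots> \<approx>\<^sub>\<int> \<chi> (of_int i * x) - \<chi> x"
    using character_diff[OF H \<chi> add_subgroup_of_int_mult[OF H x] x] .
  also have "\<dots> \<approx>\<^sub>\<int> of_int i * \<chi> x - \<chi> x"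
    using step2.IH by (rule Ints_cong_diff) simp
  finally show ?case
    by (simp add: algebra_simps)
qed

lemma character_sum:
  assumes H: "add_subgroup H" and \<chi>: "character H \<chi>" and f: "\<And>i. i \<in> J \<Longrightarrow> f i \<in> H"
  shows "\<chi> (sum f J) \<approx>\<^sub>\<int> (\<Sum>i\<in>J. \<chi> (f i))"
  using f
proof (induction J rule: infinite_finite_induct)
  case (insert j J)
  have "\<chi> (f j + sum f J) \<approx>\<^sub>\<int> \<chi> (f j) + \<chi> (sum f J)"
    using insert.prems by (intro character_add[OF \<chi>] add_subgroup_sum[OF H]) auto
  also have "\<dots> \<approx>\<^sub>\<int> \<chi> (f j) + (\<Sum>i\<in>J. \<chi> (f i))"
    using insert by (intro Ints_cong_add) auto
  finally show ?case
    using insert.hyps by simp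
qed (use character_zero[OF H \<chi>] in simp_all)

lemma add_subgroup_abs_multiple:
  fixes g :: "'g::ring_1"
  assumes H: "add_subgroup H" and a: "of_int a * g \<in> H"
  shows "of_nat (nat \<bar>a\<bar>) * g \<in> H"
proof (cases "a \<ge> 0")
  case True
  then show ?thesis
    using a by (simp add: of_nat_nat)
next
  case False
  then have "of_nat (nat \<bar>a\<bar>) * g = - (of_int a * g)"
    by (simp add: of_nat_nat)
  then show ?thesis
    using add_subgroup_minus[OF H a] by simp
qed

lemma add_subgroup_mod_multiple:
  fixes g :: "'g::ring_1"
  assumes H: "add_subgroup H" and "of_int a * g \<in> H" "of_int b * g \<in> H"
  shows "of_int (a mod b) * g \<in> H"
proof -
  have "(of_int a :: 'g) = of_int (a div b) * of_int b + of_int (a mod b)"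
    by (simp flip: of_int_mult of_int_add)
  then have "of_int (a mod b) * g = of_int a * g - of_int (a div b) * (of_int b * g)"
    by (simp add: algebra_simps)
  then show ?thesis
    using assms by (simp add: add_subgroup_diff add_subgroup_of_int_mult)
qed

lemma add_subgroup_multiples_dvd:
  fixes g :: "'g::ring_1"
  assumes H: "add_subgroup H"
  obtains e :: int where "\<And>a. of_int a * g \<in> H \<longleftrightarrow> e dvd a"
proof (cases "\<exists>n::nat. n > 0 \<and> of_nat n * g \<in> H")
  case True
  define e where "e = (LEAST n::nat. n > 0 \<and> of_nat n * g \<in> H)"
  have e: "e > 0" "of_int (int e) * g \<in> H"
    using LeastI_ex[OF True] by (simp_all add: e_def)
  have "of_int a * g \<in> H \<longleftrightarrow> int e dvd a" for a
  proof
    assume "of_int a * g \<in> H"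
    then have "of_int (a mod int e) * g \<in> H"
      using add_subgroup_mod_multiple[OF H _ e(2)] by blast
    moreover have r: "0 \<le> a mod int e" "a mod int e < int e"
      using e(1) by simp_all
    ultimately have mod_in: "of_nat (nat (a mod int e)) * g \<in> H" and "nat (a mod int e) < e"
      by (simp_all add: of_nat_nat nat_less_iff)
    from this(2) have "\<not> (0 < nat (a mod int e) \<and> of_nat (nat (a mod int e)) * g \<in> H)"
      unfolding e_def by (rule not_less_Least)
    then have "\<not> 0 < nat (a mod int e)"
      using mod_in by simp
    then show "int e dvd a"
      using r(1) by (simp add: dvd_eq_mod_eq_0)
  next
    assume "int e dvd a"
    then obtain q where "a = int e * q"
      by blast
    then have "(of_int a :: 'g) = of_int q * of_int (int e)"
      by (metis mult.commute of_int_mult)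
    then have "of_int a * g = of_int q * (of_int (int e) * g)"
      by (simp add: mult.assoc)
    then show "of_int a * g \<in> H"
      using add_subgroup_of_int_mult[OF H e(2)] by simp
  qed
  then show thesis
    by (rule that)
next
  case False
  have "of_int a * g \<in> H \<longleftrightarrow> a = 0" for a
  proof
    assume "of_int a * g \<in> H"
    then have "of_nat (nat \<bar>a\<bar>) * g \<in> H"
      by (rule add_subgroup_abs_multiple[OF H])
    show "a = 0"
    proof (rule ccontr)
      assume "a \<noteq> 0"
      then have "nat \<bar>a\<bar> > 0"
        by simp
      with \<open>of_nat (nat \<bar>a\<bar>) * g \<in> H\<close> False show False
        by blast
    qed
  qed (simp add: add_subgroup_zero[OF H])
  then show thesis
    using that[of 0] by simp
qed

lemma add_subgroupI_torsion:
  fixes T :: "'g::ring_1 set"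
  assumes zero: "0 \<in> T" and add: "\<And>x y. x \<in> T \<Longrightarrow> y \<in> T \<Longrightarrow> x + y \<in> T"
    and torsion: "\<And>x. x \<in> T \<Longrightarrow> \<exists>N>0. - (of_nat N * x) \<in> T"
  shows "add_subgroup T"
proof -
  have multiple: "of_nat k * x \<in> T" if "x \<in> T" for k x
    by (induction k) (use zero add that in \<open>simp_all add: distrib_right\<close>)
  have "- x \<in> T" if x: "x \<in> T" for x
  proof -
    obtain N where N: "N > 0" "- (of_nat N * x) \<in> T"
      using torsion[OF x] by blast
    have "- x = of_nat (N - 1) * x + - (of_nat N * x)"
      using N(1) by (simp add: of_nat_diff algebra_simps)
    then show ?thesis
      using add[OF multiple[OF x] N(2)] by simp
  qed
  then show ?thesis
    using zero add by (simp add: add_subgroup_def)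
qed

definition subgroup_adjoin :: "'g::ring_1 set \<Rightarrow> 'g \<Rightarrow> 'g set" where
  "subgroup_adjoin H g = {h + of_int a * g | h a. h \<in> H}"

lemma add_subgroup_adjoin:
  assumes H: "add_subgroup H"
  shows "add_subgroup (subgroup_adjoin H g)" "H \<subseteq> subgroup_adjoin H g" "g \<in> subgroup_adjoin H g"
proof -
  show "add_subgroup (subgroup_adjoin H g)"
    unfolding add_subgroup_def subgroup_adjoin_def
  proof (intro conjI ballI)
    show "0 \<in> {h + of_int a * g | h a. h \<in> H}"
      using add_subgroup_zero[OF H] by (intro CollectI exI[of _ 0]) simp
  next
    fix x y assume "x \<in> {h + of_int a * g | h a. h \<in> H}" "y \<in> {h + of_int a * g | h a. h \<in> H}"
    then obtain h a h' b where "x = h + of_int a * g" "y = h' + of_int b * g" "h \<in> H" "h' \<in> H"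
      by blast
    then have "x + y = (h + h') + of_int (a + b) * g \<and> h + h' \<in> H"
      using add_subgroup_add[OF H] by (simp add: algebra_simps)
    then show "x + y \<in> {h + of_int a * g | h a. h \<in> H}"
      by blast
  next
    fix x assume "x \<in> {h + of_int a * g | h a. h \<in> H}"
    then obtain h a where "x = h + of_int a * g" "h \<in> H"
      by blast
    then have "- x = (- h) + of_int (- a) * g \<and> - h \<in> H"
      using add_subgroup_minus[OF H] by simp
    then show "- x \<in> {h + of_int a * g | h a. h \<in> H}"
      by blast
  qed
  show "H \<subseteq> subgroup_adjoin H g"
  proof
    fix h assume "h \<in> H"
    then show "h \<in> subgroup_adjoin H g"
      unfolding subgroup_adjoin_def by (intro CollectI exI[of _ h] exI[of _ 0]) simp
  qed
  show "g \<in> subgroup_adjoin H g"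
    unfolding subgroup_adjoin_def using add_subgroup_zero[OF H]
    by (intro CollectI exI[of _ 0] exI[of _ 1]) simp
qed

definition adjoin_character :: "'g::ring_1 set \<Rightarrow> 'g \<Rightarrow> ('g \<Rightarrow> rat) \<Rightarrow> rat \<Rightarrow> 'g \<Rightarrow> rat" where
  "adjoin_character H g \<chi> v x =
     (let r = SOME r. fst r \<in> H \<and> x = fst r + of_int (snd r) * g in \<chi> (fst r) + of_int (snd r) * v)"

context
  fixes H :: "'g::ring_1 set" and g :: 'g and \<chi> :: "'g \<Rightarrow> rat" and v :: rat
  assumes H: "add_subgroup H" and \<chi>: "character H \<chi>"
    and compatible: "\<And>a. of_int a * g \<in> H \<Longrightarrow> of_int a * v \<approx>\<^sub>\<int> \<chi> (of_int a * g)"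
begin

lemma adjoin_character_cong:
  assumes h: "h \<in> H" and x: "x = h + of_int a * g"
  shows "adjoin_character H g \<chi> v x \<approx>\<^sub>\<int> \<chi> h + of_int a * v"
proof -
  define r where "r = (SOME r. fst r \<in> H \<and> x = fst r + of_int (snd r) * g)"
  have "\<exists>r. fst r \<in> H \<and> x = fst r + of_int (snd r) * g"
    using h x by (intro exI[of _ "(h, a)"]) simp
  then have "fst r \<in> H \<and> x = fst r + of_int (snd r) * g"
    unfolding r_def by (rule someI_ex)
  then have r: "fst r \<in> H" "x = fst r + of_int (snd r) * g"
    by simp_all
  have diff: "h - fst r = of_int (snd r - a) * g"
    using x r(2) by (simp add: algebra_simps)
  have "of_int (snd r - a) * g \<in> H"
    using add_subgroup_diff[OF H h r(1)] unfolding diff .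
  then have "of_int (snd r - a) * v \<approx>\<^sub>\<int> \<chi> (h - fst r)"
    unfolding diff by (rule compatible)
  also have "\<dots> \<approx>\<^sub>\<int> \<chi> h - \<chi> (fst r)"
    using character_diff[OF H \<chi> h r(1)] .
  finally have "of_int (snd r - a) * v + (\<chi> (fst r) + of_int a * v)
      \<approx>\<^sub>\<int> \<chi> h - \<chi> (fst r) + (\<chi> (fst r) + of_int a * v)"
    by (rule Ints_cong_add) simp
  then show ?thesis
    by (simp add: adjoin_character_def r_def[symmetric] algebra_simps)
qed

lemma character_adjoin:
  shows "character (subgroup_adjoin H g) (adjoin_character H g \<chi> v)"
    and "\<And>h. h \<in> H \<Longrightarrow> adjoin_character H g \<chi> v h \<approx>\<^sub>\<int> \<chi> h"
    and "adjoin_character H g \<chi> v g \<approx>\<^sub>\<int> v"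
proof -
  let ?\<chi>' = "adjoin_character H g \<chi> v"
  show "character (subgroup_adjoin H g) ?\<chi>'"
    unfolding character_def
  proof (intro ballI)
    fix x y assume "x \<in> subgroup_adjoin H g" "y \<in> subgroup_adjoin H g"
    then obtain h a h' b where x: "x = h + of_int a * g" "h \<in> H" and y: "y = h' + of_int b * g" "h' \<in> H"
      unfolding subgroup_adjoin_def by blast
    have "x + y = (h + h') + of_int (a + b) * g"
      using x y by (simp add: algebra_simps)
    then have "?\<chi>' (x + y) \<approx>\<^sub>\<int> \<chi> (h + h') + of_int (a + b) * v"
      by (rule adjoin_character_cong[OF add_subgroup_add[OF H x(2) y(2)]])
    also have "\<dots> \<approx>\<^sub>\<int> (\<chi> h + \<chi> h') + of_int (a + b) * v"
      using character_add[OF \<chi> x(2) y(2)] by (rule Ints_cong_add) simp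
    also have "\<dots> = (\<chi> h + of_int a * v) + (\<chi> h' + of_int b * v)"
      by (simp add: algebra_simps)
    also have "\<dots> \<approx>\<^sub>\<int> ?\<chi>' x + ?\<chi>' y"
      using Ints_cong_add[OF Ints_cong_sym[OF adjoin_character_cong[OF x(2,1)]]
          Ints_cong_sym[OF adjoin_character_cong[OF y(2,1)]]] .
    finally show "?\<chi>' (x + y) \<approx>\<^sub>\<int> ?\<chi>' x + ?\<chi>' y" .
  qed
  show "?\<chi>' h \<approx>\<^sub>\<int> \<chi> h" if "h \<in> H" for h
    using adjoin_character_cong[OF that, of _ 0] by simp
  have "?\<chi>' g \<approx>\<^sub>\<int> \<chi> 0 + v"
    using adjoin_character_cong[OF add_subgroup_zero[OF H], of g 1] by simp
  also have "\<dots> \<approx>\<^sub>\<int> 0 + v"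
    using character_zero[OF H \<chi>] by (rule Ints_cong_add) simp
  finally show "?\<chi>' g \<approx>\<^sub>\<int> v"
    by simp
qed

end

text \<open>This is where the divisibility of \<open>\<rat>\<close> is used.\<close>
lemma exists_compatible_value:
  fixes g :: "'g::ring_1"
  assumes H: "add_subgroup H" and \<chi>: "character H \<chi>"
  obtains v where "\<And>a. of_int a * g \<in> H \<Longrightarrow> of_int a * v \<approx>\<^sub>\<int> \<chi> (of_int a * g)"
proof -
  obtain e where e: "\<And>a. of_int a * g \<in> H \<longleftrightarrow> e dvd a"
    using add_subgroup_multiples_dvd[OF H] by blast
  show thesis
  proof (cases "e = 0")
    case True
    show thesis
    proof (rule that[of 0])
      fix a assume "of_int a * g \<in> H"
      then have "a = 0"
        using e True by simp
      then show "of_int a * 0 \<approx>\<^sub>\<int> \<chi> (of_int a * g)"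
        using Ints_cong_sym[OF character_zero[OF H \<chi>]] by simp
    qed
  next
    case False
    show thesis
    proof (rule that[of "\<chi> (of_int e * g) / of_int e"])
      fix a assume "of_int a * g \<in> H"
      then obtain q where a: "a = e * q"
        using e by blast
      have "(of_int a :: 'g) = of_int q * of_int e"
        using a by (metis mult.commute of_int_mult)
      then have a_g: "of_int a * g = of_int q * (of_int e * g)"
        by (simp add: mult.assoc)
      have "of_int a * (\<chi> (of_int e * g) / of_int e) = of_int q * \<chi> (of_int e * g)"
        using False a by simp
      also have "\<dots> \<approx>\<^sub>\<int> \<chi> (of_int q * (of_int e * g))"
        using e[of e] Ints_cong_sym[OF character_of_int_mult[OF H \<chi>]] by simp
      also have "\<dots> = \<chi> (of_int a * g)"
        by (simp add: a_g)
      finally show "of_int a * (\<chi> (of_int e * g) / of_int e) \<approx>\<^sub>\<int> \<chi> (of_int a * g)" .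
    qed
  qed
qed

lemma chain_UN_common:
  assumes mono: "\<And>n. H n \<subseteq> H (Suc n)" and "x \<in> (\<Union>n. H n)" "y \<in> (\<Union>n. H n)"
  obtains k where "x \<in> H k" "y \<in> H k"
proof -
  obtain i j where "x \<in> H i" "y \<in> H j"
    using assms(2,3) by blast
  then show thesis
    using that lift_Suc_mono_le[of H, OF mono, of i "max i j"] lift_Suc_mono_le[of H, OF mono, of j "max i j"]
    by auto
qed

lemma add_subgroup_UN_chain:
  assumes H: "\<And>n. add_subgroup (H n)" and mono: "\<And>n. H n \<subseteq> H (Suc n)"
  shows "add_subgroup (\<Union>n. H n)"
  unfolding add_subgroup_def
proof (intro conjI ballI)
  show "0 \<in> (\<Union>n. H n)"
    using add_subgroup_zero[OF H] by blast
next
  fix x y assume "x \<in> (\<Union>n. H n)" "y \<in> (\<Union>n. H n)"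
  then obtain k where "x \<in> H k" "y \<in> H k"
    using chain_UN_common[of H, OF mono] by blast
  then show "x + y \<in> (\<Union>n. H n)"
    using add_subgroup_add[OF H] by blast
next
  fix x assume "x \<in> (\<Union>n. H n)"
  then obtain k where "x \<in> H k"
    by blast
  then show "- x \<in> (\<Union>n. H n)"
    using add_subgroup_minus[OF H] by blast
qed

lemma character_UN_chain:
  assumes H: "\<And>n. add_subgroup (H n)" and \<chi>: "\<And>n. character (H n) (\<chi> n)"
    and mono: "\<And>n. H n \<subseteq> H (Suc n)" and extends: "\<And>n h. h \<in> H n \<Longrightarrow> \<chi> (Suc n) h \<approx>\<^sub>\<int> \<chi> n h"
  obtains \<psi> where "character (\<Union>n. H n) \<psi>" "\<And>n h. h \<in> H n \<Longrightarrow> \<psi> h \<approx>\<^sub>\<int> \<chi> n h"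
proof -
  have extends_le: "\<chi> k h \<approx>\<^sub>\<int> \<chi> j h" if "j \<le> k" "h \<in> H j" for j k h
    using that(1)
  proof (induction k rule: dec_induct)
    case (step k)
    have "h \<in> H k"
      using lift_Suc_mono_le[of H, OF mono step.hyps(1)] that(2) by blast
    then show ?case
      using Ints_cong_trans[OF extends step.IH] by blast
  qed simp
  define \<psi> where "\<psi> x = \<chi> (LEAST n. x \<in> H n) x" for x
  have \<psi>: "\<psi> h \<approx>\<^sub>\<int> \<chi> n h" if "h \<in> H n" for n h
  proof -
    have "(LEAST n. h \<in> H n) \<le> n"
      using that by (rule Least_le)
    moreover have "h \<in> H (LEAST n. h \<in> H n)"
      using that by (rule LeastI)
    ultimately have "\<chi> n h \<approx>\<^sub>\<int> \<chi> (LEAST n. h \<in> H n) h"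
      by (rule extends_le)
    then show ?thesis
      unfolding \<psi>_def by (rule Ints_cong_sym)
  qed
  have "character (\<Union>n. H n) \<psi>"
    unfolding character_def
  proof (intro ballI)
    fix x y assume "x \<in> (\<Union>n. H n)" "y \<in> (\<Union>n. H n)"
    then obtain k where k: "x \<in> H k" "y \<in> H k"
      using chain_UN_common[of H, OF mono] by blast
    have "\<psi> (x + y) \<approx>\<^sub>\<int> \<chi> k (x + y)"
      using \<psi> add_subgroup_add[OF H k] by blast
    also have "\<dots> \<approx>\<^sub>\<int> \<chi> k x + \<chi> k y"
      using character_add[OF \<chi> k] .
    also have "\<dots> \<approx>\<^sub>\<int> \<psi> x + \<psi> y"
      using Ints_cong_add[OF Ints_cong_sym[OF \<psi>[OF k(1)]] Ints_cong_sym[OF \<psi>[OF k(2)]]] .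
    finally show "\<psi> (x + y) \<approx>\<^sub>\<int> \<psi> x + \<psi> y" .
  qed
  then show thesis
    using that \<psi> by blast
qed

lemma character_extend_adjoin:
  assumes H: "add_subgroup H" and \<chi>: "character H \<chi>"
  obtains \<chi>' where "character (subgroup_adjoin H g) \<chi>'" "\<And>h. h \<in> H \<Longrightarrow> \<chi>' h \<approx>\<^sub>\<int> \<chi> h"
proof -
  obtain v where "\<And>a. of_int a * g \<in> H \<Longrightarrow> of_int a * v \<approx>\<^sub>\<int> \<chi> (of_int a * g)"
    using exists_compatible_value[OF H \<chi>] by blast
  from character_adjoin(1,2)[OF H \<chi> this] show thesis
    by (rule that)
qed

lemma character_adjoin_chain:
  fixes g :: "nat \<Rightarrow> 'g::ring_1"
  assumes H: "add_subgroup H" and \<chi>: "character H \<chi>"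
  obtains K \<psi> where "K 0 = H" "\<psi> 0 = \<chi>" "\<And>n. add_subgroup (K n)" "\<And>n. character (K n) (\<psi> n)"
    "\<And>n. K (Suc n) = subgroup_adjoin (K n) (g n)" "\<And>n h. h \<in> K n \<Longrightarrow> \<psi> (Suc n) h \<approx>\<^sub>\<int> \<psi> n h"
proof -
  define P where "P n y \<longleftrightarrow> (n = 0 \<longrightarrow> y = (H, \<chi>)) \<and> add_subgroup (fst y) \<and> character (fst y) (snd y)"
    for n :: nat and y :: "'g set \<times> ('g \<Rightarrow> rat)"
  define Q where "Q n y y' \<longleftrightarrow> fst y' = subgroup_adjoin (fst y) (g n) \<and> (\<forall>h\<in>fst y. snd y' h \<approx>\<^sub>\<int> snd y h)"
    for n and y y' :: "'g set \<times> ('g \<Rightarrow> rat)"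
  have step: "\<exists>y'. P (Suc n) y' \<and> Q n y y'" if "P n y" for n y
  proof -
    have K: "add_subgroup (fst y)" "character (fst y) (snd y)"
      using that by (simp_all add: P_def)
    obtain \<psi>' where "character (subgroup_adjoin (fst y) (g n)) \<psi>'" "\<And>h. h \<in> fst y \<Longrightarrow> \<psi>' h \<approx>\<^sub>\<int> snd y h"
      using character_extend_adjoin[OF K] by blast
    then show ?thesis
      using add_subgroup_adjoin(1)[OF K(1)] by (intro exI[of _ "(subgroup_adjoin (fst y) (g n), \<psi>')"])
        (simp add: P_def Q_def)
  qed
  have "P 0 (H, \<chi>)"
    using H \<chi> by (simp add: P_def)
  then have "\<exists>f. \<forall>n. P n (f n) \<and> Q n (f n) (f (Suc n))"
    using dependent_nat_choice[of P Q, OF exI step] by blast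
  then obtain f where f: "\<And>n. P n (f n)" "\<And>n. Q n (f n) (f (Suc n))"
    by blast
  have "f 0 = (H, \<chi>)"
    using f(1)[of 0] by (simp add: P_def)
  moreover have "add_subgroup (fst (f n))" "character (fst (f n)) (snd (f n))" for n
    using f(1)[of n] by (simp_all add: P_def)
  moreover have "fst (f (Suc n)) = subgroup_adjoin (fst (f n)) (g n)"
    "\<And>h. h \<in> fst (f n) \<Longrightarrow> snd (f (Suc n)) h \<approx>\<^sub>\<int> snd (f n) h" for n
    using f(2)[of n] by (simp_all add: Q_def)
  ultimately show thesis
    by (intro that[of "\<lambda>n. fst (f n)" "\<lambda>n. snd (f n)"]) simp_all
qed

text \<open>Injectivity of \<open>\<rat>/\<int>\<close> for countably many new elements: adjoin them one at a time along an
  enumeration, so that no appeal to Zorn's lemma is needed.\<close>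
lemma character_extend_countable:
  fixes B :: "'g::ring_1 set"
  assumes H: "add_subgroup H" and \<chi>: "character H \<chi>" and B: "countable B"
  obtains H' \<chi>' where "add_subgroup H'" "H \<subseteq> H'" "B \<subseteq> H'" "character H' \<chi>'"
    "\<And>h. h \<in> H \<Longrightarrow> \<chi>' h \<approx>\<^sub>\<int> \<chi> h"
proof -
  define g where "g = from_nat_into (insert 0 B)"
  obtain K \<psi> where K: "K 0 = H" "\<psi> 0 = \<chi>" "\<And>n. add_subgroup (K n)" "\<And>n. character (K n) (\<psi> n)"
    "\<And>n. K (Suc n) = subgroup_adjoin (K n) (g n)" "\<And>n h. h \<in> K n \<Longrightarrow> \<psi> (Suc n) h \<approx>\<^sub>\<int> \<psi> n h"
    using character_adjoin_chain[OF H \<chi>] by blast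
  have mono: "K n \<subseteq> K (Suc n)" and g: "g n \<in> K (Suc n)" for n
    using add_subgroup_adjoin(2,3)[OF K(3)] by (simp_all add: K(5))
  obtain \<chi>' where \<chi>': "character (\<Union>n. K n) \<chi>'" "\<And>n h. h \<in> K n \<Longrightarrow> \<chi>' h \<approx>\<^sub>\<int> \<psi> n h"
    using character_UN_chain[of K \<psi>, OF K(3,4) mono K(6)] by blast
  show thesis
  proof (rule that[OF add_subgroup_UN_chain[of K, OF K(3) mono] _ _ \<chi>'(1)])
    show "H \<subseteq> (\<Union>n. K n)"
      using K(1) by blast
    show "B \<subseteq> (\<Union>n. K n)"
    proof
      fix b assume "b \<in> B"
      moreover have "range g = insert 0 B"
        using B by (simp add: g_def)
      ultimately obtain n where "b = g n"
        by (metis UnI2 imageE insert_is_Un)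
      then show "b \<in> (\<Union>n. K n)"
        using g[of n] by blast
    qed
    show "\<chi>' h \<approx>\<^sub>\<int> \<chi> h" if "h \<in> H" for h
      using \<chi>'(2)[of h 0] that K(1,2) by simp
  qed
qed

lemma one_div_of_int_Ints:
  assumes "e \<noteq> 0" "(1 / of_int e :: rat) \<in> \<int>"
  shows "e dvd 1"
proof -
  obtain k where k: "1 / of_int e = (of_int k :: rat)"
    using assms(2) by (auto elim: Ints_cases)
  have "(of_int (e * k) :: rat) = 1"
    using assms(1) by (simp add: k[symmetric])
  then have "e * k = 1"
    by (simp only: of_int_eq_1_iff)
  then show "e dvd 1"
    by (metis dvd_triv_left)
qed

lemma character_separating:
  fixes T :: "'g::ring_1 set"
  assumes T: "add_subgroup T" and u: "u \<notin> T" and torsion: "N > 0" "of_nat N * u \<in> T"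
    and B: "countable B"
  obtains H \<chi> where "add_subgroup H" "T \<subseteq> H" "B \<subseteq> H" "character H \<chi>"
    "\<And>t. t \<in> T \<Longrightarrow> \<chi> t \<approx>\<^sub>\<int> 0" "\<not> \<chi> u \<approx>\<^sub>\<int> 0"
proof -
  obtain e where e: "\<And>a. of_int a * u \<in> T \<longleftrightarrow> e dvd a"
    using add_subgroup_multiples_dvd[OF T] by blast
  have "e dvd int N"
    using e[of "int N"] torsion(2) by simp
  then have "e \<noteq> 0"
    using torsion(1) by auto
  have compatible: "of_int a * (1 / of_int e) \<approx>\<^sub>\<int> (\<lambda>_. 0) (of_int a * u)"
    if a: "of_int a * u \<in> T" for a
  proof -
    obtain q where "a = e * q"
      using e a by blast
    then have "of_int a * (1 / of_int e) = (of_int q :: rat)"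
      using \<open>e \<noteq> 0\<close> by simp
    then show ?thesis
      by simp
  qed
  have "character T (\<lambda>_. 0)"
    by (simp add: character_def)
  note \<chi>1 = character_adjoin[OF T this compatible]
  obtain H \<chi> where H: "add_subgroup H" "subgroup_adjoin T u \<subseteq> H" "B \<subseteq> H" "character H \<chi>"
    "\<And>h. h \<in> subgroup_adjoin T u \<Longrightarrow> \<chi> h \<approx>\<^sub>\<int> adjoin_character T u (\<lambda>_. 0) (1 / of_int e) h"
    using character_extend_countable[OF add_subgroup_adjoin(1)[OF T] \<chi>1(1) B] by blast
  show thesis
  proof (rule that[OF H(1) _ H(3,4)])
    show "T \<subseteq> H"
      using H(2) add_subgroup_adjoin(2)[OF T] by blast
    show "\<chi> t \<approx>\<^sub>\<int> 0" if "t \<in> T" for t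
      using Ints_cong_trans[OF H(5) \<chi>1(2)] add_subgroup_adjoin(2)[OF T] that by blast
    have \<chi>_u: "\<chi> u \<approx>\<^sub>\<int> 1 / of_int e"
      using Ints_cong_trans[OF H(5) \<chi>1(3)] add_subgroup_adjoin(3)[OF T] by blast
    have "\<not> e dvd 1"
      using e[of 1] u by simp
    then have "(1 / of_int e :: rat) \<notin> \<int>"
      using one_div_of_int_Ints \<open>e \<noteq> 0\<close> by blast
    then show "\<not> \<chi> u \<approx>\<^sub>\<int> 0"
      using Ints_cong_Ints_iff[OF \<chi>_u] by simp
  qed
qed

section \<open>Truncation sequences of \<open>p\<close>-adic numbers\<close>

lemma rmod_bounds:
  assumes "m > 0"
  shows "0 \<le> rmod r m" "rmod r m < m"
proof -
  have "of_int \<lfloor>r / m\<rfloor> * m \<le> r / m * m"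
    using assms by (intro mult_right_mono) simp_all
  moreover have "r / m * m < (of_int \<lfloor>r / m\<rfloor> + 1) * m"
    using assms by (intro mult_strict_right_mono) linarith+
  ultimately have "m * of_int \<lfloor>r / m\<rfloor> \<le> r" "r < m * of_int \<lfloor>r / m\<rfloor> + m"
    using assms by (simp_all add: algebra_simps)
  then show "0 \<le> rmod r m" "rmod r m < m"
    by (simp_all add: rmod_def)
qed

lemma rmod_diff_Ints: "(r - rmod r m) / m \<in> \<int>"
  by (cases "m = 0") (simp_all add: rmod_def)

lemma rmod_unique:
  assumes m: "m > 0" and y: "0 \<le> y" "y < m" and d: "(r - y) / m \<in> \<int>"
  shows "rmod r m = y"
proof -
  obtain k where "(r - y) / m = of_int k"
    using d by (auto elim: Ints_cases)
  then have r: "r = y + m * of_int k"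
    using m by (simp add: field_simps)
  have "r / m = y / m + of_int k" "0 \<le> y / m" "y / m < 1"
    using m y by (simp_all add: r field_simps)
  then have "\<lfloor>r / m\<rfloor> = k"
    by (simp add: floor_unique)
  then show ?thesis
    by (simp add: rmod_def r)
qed

lemma rmod_add_rmod:
  assumes "m > 0"
  shows "rmod (rmod a m + b) m = rmod (a + b) m"
proof (rule rmod_unique)
  have "(rmod a m + b - rmod (a + b) m) / m = (a + b - rmod (a + b) m) / m - (a - rmod a m) / m"
    using assms by (simp add: field_simps)
  then show "(rmod a m + b - rmod (a + b) m) / m \<in> \<int>"
    using rmod_diff_Ints by (simp add: Ints_diff)
qed (use assms rmod_bounds[OF assms] in simp_all)

lemma rmod_add:
  assumes "m > 0"
  shows "rmod (a + b) m = rmod (rmod a m + rmod b m) m"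
proof -
  have "rmod (rmod a m + rmod b m) m = rmod (a + rmod b m) m"
    by (rule rmod_add_rmod[OF assms])
  also have "\<dots> = rmod (rmod b m + a) m"
    by (simp only: add.commute)
  also have "\<dots> = rmod (b + a) m"
    by (rule rmod_add_rmod[OF assms])
  finally show ?thesis
    by (simp only: add.commute)
qed

lemma Qp_digit_bounds:
  assumes "x \<in> Qp p"
  shows "0 \<le> x n" "x n < of_nat p ^ n"
  using assms by (simp_all add: Qp_def)

lemma Qp_truncation_cong:
  assumes x: "x \<in> Qp p" and p: "p > 0" and "k \<le> m"
  shows "(x m - x k) / of_nat p ^ k \<in> \<int>"
  using \<open>k \<le> m\<close>
proof (induction m rule: dec_induct)
  case (step m)
  have "(x (Suc m) - x m) / of_nat p ^ m \<in> \<int>"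
    using rmod_diff_Ints[of "x (Suc m)" "of_nat p ^ m"] x by (simp add: Qp_def)
  then have "(x (Suc m) - x m) / of_nat p ^ m * of_nat p ^ (m - k) \<in> \<int>"
    by (intro Ints_mult) simp_all
  also have "(x (Suc m) - x m) / of_nat p ^ m * of_nat p ^ (m - k) = (x (Suc m) - x m) / of_nat p ^ k"
    using p step.hyps(1) by (simp add: power_diff)
  finally have "(x (Suc m) - x m) / of_nat p ^ k + (x m - x k) / of_nat p ^ k \<in> \<int>"
    using step.IH by (rule Ints_add)
  then show ?case
    by (simp add: diff_divide_distrib)
qed simp

lemma Qp_truncation_eq:
  assumes "x \<in> Qp p" "p > 0" "k \<le> m"
  obtains j :: int where "x m = x k + of_nat p ^ k * of_int j"
proof -
  obtain j where "(x m - x k) / of_nat p ^ k = of_int j"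
    using Qp_truncation_cong[OF assms] by (auto elim: Ints_cases)
  then show thesis
    using that[of j] \<open>p > 0\<close> by (simp add: field_simps)
qed

lemma Qp_den_Ints:
  assumes x: "x \<in> Qp p" and "qp_den p x \<le> d"
  shows "of_nat p ^ d * x n \<in> \<int>"
proof -
  have "\<forall>n. of_nat p ^ qp_den p x * x n \<in> \<int>"
    unfolding qp_den_def by (rule LeastI_ex) (use x in \<open>simp add: Qp_def\<close>)
  then have "of_nat p ^ (d - qp_den p x) * (of_nat p ^ qp_den p x * x n) \<in> \<int>"
    by simp
  then show ?thesis
    using \<open>qp_den p x \<le> d\<close> by (simp add: mult.assoc[symmetric] power_add[symmetric])
qed

lemma Qp_Ints_mult_truncations:
  assumes x: "x \<in> Qp p" and p: "p > 0" and N: "of_nat p ^ d * x N \<in> \<int>"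
  shows "of_nat p ^ d * x k \<in> \<int>"
proof (cases "k \<le> N")
  case True
  obtain j where "x N = x k + of_nat p ^ k * of_int j"
    using Qp_truncation_eq[OF x p True] .
  then have "of_nat p ^ d * x k = of_nat p ^ d * x N - of_nat p ^ d * of_nat p ^ k * of_int j"
    by (simp add: algebra_simps)
  then show ?thesis
    using N by simp
next
  case False
  obtain j where "x k = x N + of_nat p ^ N * of_int j"
    using Qp_truncation_eq[OF x p] False by (meson nle_le)
  then have "of_nat p ^ d * x k = of_nat p ^ d * x N + of_nat p ^ d * of_nat p ^ N * of_int j"
    by (simp add: algebra_simps)
  then show ?thesis
    using N by simp
qed

lemma Zp_iff_Ints:
  assumes x: "x \<in> Qp p" and p: "p > 0"
  shows "x \<in> Zp p \<longleftrightarrow> (\<forall>n. x n \<in> \<int>)"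
proof
  assume "x \<in> Zp p"
  then show "\<forall>n. x n \<in> \<int>"
    using Qp_Ints_mult_truncations[OF x p, of 0 0] by (simp add: Zp_def)
next
  assume "\<forall>n. x n \<in> \<int>"
  then obtain k where "x 0 = of_int k"
    by (auto elim: Ints_cases)
  moreover have "0 \<le> x 0" "x 0 < 1"
    using Qp_digit_bounds[OF x, of 0] by simp_all
  ultimately show "x \<in> Zp p"
    using x by (simp add: Zp_def)
qed

lemma Zp_den:
  assumes "x \<in> Zp p" "p > 0"
  shows "qp_den p x = 0"
proof -
  have "\<forall>n. of_nat p ^ 0 * x n \<in> \<int>"
    using Zp_iff_Ints[of x p] assms by (simp add: Zp_def)
  then show ?thesis
    unfolding qp_den_def by (rule Least_eq_0)
qed

lemma qp_zero_Zp: "p > 0 \<Longrightarrow> qp_zero \<in> Zp p"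
  by (simp add: Zp_def Qp_def qp_zero_def rmod_def)

lemma Qp_truncation_product_cong:
  assumes x: "x \<in> Qp p" and y: "y \<in> Qp p" and p: "p > 0" and "m \<le> m'"
    and "of_nat p ^ m * x m \<in> \<int>" "of_nat p ^ m * y m \<in> \<int>"
  shows "x m' * y m' \<approx>\<^sub>\<int> x m * y m"
proof -
  obtain a where a: "x m' = x m + of_nat p ^ m * of_int a"
    using Qp_truncation_eq[OF x p \<open>m \<le> m'\<close>] .
  obtain b where b: "y m' = y m + of_nat p ^ m * of_int b"
    using Qp_truncation_eq[OF y p \<open>m \<le> m'\<close>] .
  have "x m' * y m' - x m * y m
      = of_int a * (of_nat p ^ m * y m) + of_int b * (of_nat p ^ m * x m)
        + of_nat p ^ m * of_nat p ^ m * of_int a * of_int b"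
    by (simp add: a b algebra_simps)
  also have "\<dots> \<in> \<int>"
    using assms(5,6) by simp
  finally show ?thesis
    by (simp add: Ints_cong_def)
qed

lemma qp_prod_frac_cong:
  assumes x: "x \<in> Qp p" and y: "y \<in> Qp p" and p: "p > 0"
    and "\<And>n. of_nat p ^ m * x n \<in> \<int>" "\<And>n. of_nat p ^ m * y n \<in> \<int>"
  shows "qp_prod_frac p x y \<approx>\<^sub>\<int> x m * y m"
proof -
  define M where "M = max (qp_den p x) (qp_den p y)"
  define K where "K = max m M"
  have "qp_prod_frac p x y \<approx>\<^sub>\<int> x M * y M"
    using frac_Ints_cong by (simp add: qp_prod_frac_def M_def Let_def)
  also have "x K * y K \<approx>\<^sub>\<int> x M * y M"
    using Qp_truncation_product_cong[OF x y p, of M K] Qp_den_Ints[OF x] Qp_den_Ints[OF y]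
    by (simp add: K_def M_def)
  then have "x M * y M \<approx>\<^sub>\<int> x K * y K"
    by (rule Ints_cong_sym)
  also have "x K * y K \<approx>\<^sub>\<int> x m * y m"
    using Qp_truncation_product_cong[OF x y p, of m K] assms(4,5) by (simp add: K_def)
  finally show ?thesis .
qed

lemma qp_prod_frac_Zp: "x \<in> Zp p \<Longrightarrow> y \<in> Zp p \<Longrightarrow> p > 0 \<Longrightarrow> qp_prod_frac p x y = 0"
  by (simp add: qp_prod_frac_def Zp_den) (simp add: Zp_def)

lemma qp_prod_frac_commute: "qp_prod_frac p x y = qp_prod_frac p y x"
  by (simp add: qp_prod_frac_def max.commute mult.commute)

text \<open>Here \<open>c m\<close> plays the role of the class of \<open>x / p\<^sup>m\<close> in \<open>\<rat>/\<int>\<close>; multiplying its fractional part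
  by \<open>p\<^sup>m\<close> recovers the truncation \<open>x\<^sub>m\<close>.\<close>
lemma Qp_of_compatible_fracs:
  fixes c :: "nat \<Rightarrow> rat"
  assumes p: "p > 0" and den: "\<And>m. of_nat p ^ (m + k) * c m \<in> \<int>"
    and compatible: "\<And>m. of_nat p * c (Suc m) \<approx>\<^sub>\<int> c m"
  shows "(\<lambda>m. of_nat p ^ m * frac (c m)) \<in> Qp p"
    and "k = 0 \<Longrightarrow> (\<lambda>m. of_nat p ^ m * frac (c m)) \<in> Zp p"
proof -
  have "of_nat p ^ k * (of_nat p ^ m * frac (c m)) \<in> \<int>" for m
  proof -
    have "of_nat p ^ k * (of_nat p ^ m * frac (c m))
        = of_nat p ^ (m + k) * c m - of_nat p ^ (m + k) * of_int \<lfloor>c m\<rfloor>"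
      by (simp add: frac_def algebra_simps power_add)
    then show ?thesis
      using den[of m] by simp
  qed
  moreover have "0 \<le> of_nat p ^ m * frac (c m)" "of_nat p ^ m * frac (c m) < of_nat p ^ m" for m
    using p frac_lt_1[of "c m"] by simp_all
  moreover have "rmod (of_nat p ^ Suc m * frac (c (Suc m))) (of_nat p ^ m) = of_nat p ^ m * frac (c m)"
    for m
  proof (rule rmod_unique)
    have "(of_nat p ^ Suc m * frac (c (Suc m)) - of_nat p ^ m * frac (c m)) / of_nat p ^ m
        = (of_nat p * c (Suc m) - c m) - of_nat p * of_int \<lfloor>c (Suc m)\<rfloor> + of_int \<lfloor>c m\<rfloor>"
      using p by (simp add: frac_def field_simps)
    also have "\<dots> \<in> \<int>"
      using compatible[of m] by (simp add: Ints_cong_def)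
    finally show "(of_nat p ^ Suc m * frac (c (Suc m)) - of_nat p ^ m * frac (c m)) / of_nat p ^ m \<in> \<int>" .
  qed (use p frac_lt_1[of "c m"] in simp_all)
  ultimately show Qp: "(\<lambda>m. of_nat p ^ m * frac (c m)) \<in> Qp p"
    unfolding Qp_def by blast
  assume "k = 0"
  then have "frac (c 0) = 0"
    using den[of 0] by (simp add: frac_eq_0_iff)
  then show "(\<lambda>m. of_nat p ^ m * frac (c m)) \<in> Zp p"
    using Qp by (simp add: Zp_def)
qed

lemma qp_add_Qp:
  assumes x: "x \<in> Qp p" and y: "y \<in> Qp p" and p: "p > 0"
  shows "qp_add p x y \<in> Qp p"
proof -
  define k where "k = max (qp_den p x) (qp_den p y)"
  have "of_nat p ^ k * qp_add p x y n \<in> \<int>" for n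
  proof -
    have "of_nat p ^ k * qp_add p x y n = of_nat p ^ k * x n + of_nat p ^ k * y n
        - of_nat p ^ k * of_nat p ^ n * of_int \<lfloor>(x n + y n) / of_nat p ^ n\<rfloor>"
      by (simp add: qp_add_def rmod_def algebra_simps)
    then show ?thesis
      using Qp_den_Ints[OF x, of k n] Qp_den_Ints[OF y, of k n] by (simp add: k_def)
  qed
  moreover have "0 \<le> qp_add p x y n" "qp_add p x y n < of_nat p ^ n" for n
    using rmod_bounds[of "of_nat p ^ n"] p by (simp_all add: qp_add_def)
  moreover have "rmod (qp_add p x y (Suc n)) (of_nat p ^ n) = qp_add p x y n" for n
  proof -
    have truncate: "rmod (rmod a (of_nat p ^ Suc n)) (of_nat p ^ n) = rmod a (of_nat p ^ n)" for a
    proof (rule rmod_unique)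
      have "(rmod a (of_nat p ^ Suc n) - rmod a (of_nat p ^ n)) / of_nat p ^ n
          = (a - rmod a (of_nat p ^ n)) / of_nat p ^ n - (a - rmod a (of_nat p ^ Suc n)) / of_nat p ^ Suc n * of_nat p"
        using p by (simp add: field_simps)
      also have "\<dots> \<in> \<int>"
        using rmod_diff_Ints by (intro Ints_diff Ints_mult) simp_all
      finally show "(rmod a (of_nat p ^ Suc n) - rmod a (of_nat p ^ n)) / of_nat p ^ n \<in> \<int>" .
    qed (use rmod_bounds[of "of_nat p ^ n"] p in simp_all)
    have "rmod (qp_add p x y (Suc n)) (of_nat p ^ n) = rmod (x (Suc n) + y (Suc n)) (of_nat p ^ n)"
      by (simp only: qp_add_def truncate)
    also have "\<dots> = rmod (rmod (x (Suc n)) (of_nat p ^ n) + rmod (y (Suc n)) (of_nat p ^ n)) (of_nat p ^ n)"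
      using p by (intro rmod_add) simp
    also have "\<dots> = qp_add p x y n"
      using x y by (simp add: Qp_def qp_add_def)
    finally show ?thesis .
  qed
  ultimately show ?thesis
    unfolding Qp_def by blast
qed

lemma qp_add_Zp:
  assumes "x \<in> Zp p" "y \<in> Zp p" "p > 0"
  shows "qp_add p x y \<in> Zp p"
  using qp_add_Qp[of x p y] assms by (simp add: Zp_def qp_add_def rmod_def)

lemma qp_add_commute: "qp_add p x y = qp_add p y x"
  by (simp add: qp_add_def add.commute)

lemma qp_add_assoc:
  assumes "p > 0"
  shows "qp_add p (qp_add p x y) z = qp_add p x (qp_add p y z)"
proof -
  have "rmod (rmod (x n + y n) m + z n) m = rmod (x n + rmod (y n + z n) m) m" if "m > 0" for n m
  proof -
    have "rmod (rmod (x n + y n) m + z n) m = rmod (x n + y n + z n) m"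
      by (rule rmod_add_rmod[OF that])
    also have "\<dots> = rmod (y n + z n + x n) m"
      by (simp only: ac_simps)
    also have "\<dots> = rmod (rmod (y n + z n) m + x n) m"
      by (rule rmod_add_rmod[OF that, symmetric])
    finally show ?thesis
      by (simp only: add.commute)
  qed
  then show ?thesis
    using assms by (simp add: qp_add_def)
qed

lemma qp_add_qp_zero:
  assumes "x \<in> Qp p" "p > 0"
  shows "qp_add p x qp_zero = x"
proof -
  have "rmod (x n) (of_nat p ^ n) = x n" for n
    using Qp_digit_bounds[OF assms(1)] assms(2) by (intro rmod_unique) simp_all
  then show ?thesis
    by (simp add: qp_add_def qp_zero_def)
qed

section \<open>The module \<open>\<rat>\<^sub>p(X)\<close> and its pairing\<close>

lemma QpX_outside: "\<xi> \<in> QpX p X \<Longrightarrow> i \<notin> X \<Longrightarrow> \<xi> i = qp_zero"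
  by (simp add: QpX_def)

lemma QpX_Qp:
  assumes "\<xi> \<in> QpX p X" "p > 0"
  shows "\<xi> i \<in> Qp p"
proof (cases "i \<in> X")
  case True
  then show ?thesis
    using assms(1) by (simp add: QpX_def)
next
  case False
  then show ?thesis
    using QpX_outside[OF assms(1) False] qp_zero_Zp[OF assms(2)] by (simp add: Zp_def)
qed

lemma QpX_not_Zp:
  assumes "\<xi> \<in> QpX p X" "p > 0"
  shows "{i. \<xi> i \<notin> Zp p} \<subseteq> X" "finite {i. \<xi> i \<notin> Zp p}"
proof -
  show sub: "{i. \<xi> i \<notin> Zp p} \<subseteq> X"
  proof
    fix i assume "i \<in> {i. \<xi> i \<notin> Zp p}"
    then show "i \<in> X"
      using QpX_outside[OF assms(1)] qp_zero_Zp[OF assms(2)] by fastforce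
  qed
  then have "{i. \<xi> i \<notin> Zp p} = {i \<in> X. \<xi> i \<notin> Zp p}"
    by blast
  then show "finite {i. \<xi> i \<notin> Zp p}"
    using assms(1) by (simp add: QpX_def)
qed

lemma QpX_den_le:
  assumes \<xi>: "\<xi> \<in> QpX p X" and p: "p > 0"
  shows "qp_den p (\<xi> i) \<le> (\<Sum>j | \<xi> j \<notin> Zp p. qp_den p (\<xi> j))"
proof (cases "\<xi> i \<in> Zp p")
  case True
  then show ?thesis
    using Zp_den[OF _ p] by simp
next
  case False
  then show ?thesis
    using QpX_not_Zp(2)[OF \<xi> p] by (intro member_le_sum) simp_all
qed

lemma QpX_den_bound:
  assumes V: "finite V" "V \<subseteq> QpX p X" and p: "p > 0"
  obtains d where "\<And>m \<xi> i n. d \<le> m \<Longrightarrow> \<xi> \<in> V \<Longrightarrow> of_nat p ^ m * \<xi> i n \<in> \<int>"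
proof -
  define d where "d = (\<Sum>\<xi>\<in>V. \<Sum>j | \<xi> j \<notin> Zp p. qp_den p (\<xi> j))"
  have bound: "qp_den p (\<xi> i) \<le> d" if "\<xi> \<in> V" for \<xi> i
  proof -
    have "qp_den p (\<xi> i) \<le> (\<Sum>j | \<xi> j \<notin> Zp p. qp_den p (\<xi> j))"
      using QpX_den_le[OF subsetD[OF V(2) that] p] .
    also have "\<dots> \<le> d"
      unfolding d_def using that V(1) by (intro member_le_sum) simp_all
    finally show ?thesis .
  qed
  show thesis
  proof (rule that)
    fix m \<xi> i n assume "d \<le> m" "\<xi> \<in> V"
    then have "qp_den p (\<xi> i) \<le> m"
      using bound order.trans by blast
    then show "of_nat p ^ m * \<xi> i n \<in> \<int>"
      by (rule Qp_den_Ints[OF QpX_Qp[OF subsetD[OF V(2) \<open>\<xi> \<in> V\<close>] p]])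
  qed
qed

lemma QpX_zero_QpX: "p > 0 \<Longrightarrow> QpX_zero \<in> QpX p X"
  using qp_zero_Zp[of p] by (simp add: QpX_def QpX_zero_def Zp_def)

lemma QpX_add_QpX:
  assumes \<xi>: "\<xi> \<in> QpX p X" and \<eta>: "\<eta> \<in> QpX p X" and p: "p > 0"
  shows "QpX_add p \<xi> \<eta> \<in> QpX p X"
proof -
  have "{i \<in> X. QpX_add p \<xi> \<eta> i \<notin> Zp p} \<subseteq> {i. \<xi> i \<notin> Zp p} \<union> {i. \<eta> i \<notin> Zp p}"
    using qp_add_Zp[OF _ _ p] by (auto simp: QpX_add_def)
  then have "finite {i \<in> X. QpX_add p \<xi> \<eta> i \<notin> Zp p}"
    using QpX_not_Zp(2)[OF \<xi> p] QpX_not_Zp(2)[OF \<eta> p] finite_subset by blast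
  moreover have "QpX_add p \<xi> \<eta> i \<in> Qp p" for i
    using qp_add_Qp[OF QpX_Qp[OF \<xi> p] QpX_Qp[OF \<eta> p] p] by (simp add: QpX_add_def)
  moreover have "QpX_add p \<xi> \<eta> i = qp_zero" if "i \<notin> X" for i
  proof -
    have "qp_zero \<in> Qp p"
      using qp_zero_Zp[OF p] by (simp add: Zp_def)
    then show ?thesis
      using QpX_outside[OF \<xi> that] QpX_outside[OF \<eta> that] qp_add_qp_zero[OF _ p]
      by (simp add: QpX_add_def)
  qed
  ultimately show ?thesis
    by (simp add: QpX_def)
qed

lemma QpX_add_commute: "QpX_add p \<xi> \<eta> = QpX_add p \<eta> \<xi>"
  by (simp add: QpX_add_def qp_add_commute)

lemma QpX_add_assoc: "p > 0 \<Longrightarrow> QpX_add p (QpX_add p \<xi> \<eta>) \<zeta> = QpX_add p \<xi> (QpX_add p \<eta> \<zeta>)"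
  by (simp add: QpX_add_def qp_add_assoc)

lemma QpX_add_left_commute:
  "p > 0 \<Longrightarrow> QpX_add p \<xi> (QpX_add p \<eta> \<zeta>) = QpX_add p \<eta> (QpX_add p \<xi> \<zeta>)"
  by (metis QpX_add_assoc QpX_add_commute)

lemma QpX_add_zero: "\<xi> \<in> QpX p X \<Longrightarrow> p > 0 \<Longrightarrow> QpX_add p \<xi> QpX_zero = \<xi>"
  by (simp add: QpX_add_def QpX_zero_def qp_add_qp_zero QpX_Qp fun_eq_iff)

definition pairing_lift :: "nat \<Rightarrow> 'a set \<Rightarrow> ('a \<Rightarrow> nat \<Rightarrow> rat) \<Rightarrow> ('a \<Rightarrow> nat \<Rightarrow> rat) \<Rightarrow> rat" where
  "pairing_lift p X \<xi> \<eta> = (\<Sum>i \<in> {i \<in> X. \<xi> i \<notin> Zp p \<or> \<eta> i \<notin> Zp p}. qp_prod_frac p (\<xi> i) (\<eta> i))"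

lemma cis_rat_eq_1_iff: "cis (2 * pi * real_of_rat r) = 1 \<longleftrightarrow> r \<in> \<int>"
proof
  assume "cis (2 * pi * real_of_rat r) = 1"
  then have "cos (2 * pi * real_of_rat r) = 1"
    by (metis cis.sel(1) one_complex.sel(1))
  then obtain n :: int where "2 * pi * real_of_rat r = real_of_int n * 2 * pi"
    using cos_one_2pi_int by blast
  then have "real_of_rat r = real_of_rat (of_int n)"
    by simp
  then show "r \<in> \<int>"
    by (simp only: of_rat_eq_iff) simp
next
  assume "r \<in> \<int>"
  then have "real_of_rat r \<in> \<int>"
    by (auto elim: Ints_cases)
  then show "cis (2 * pi * real_of_rat r) = 1"
    by simp
qed

lemma pairing_eq_1_iff: "pairing p X \<xi> \<eta> = 1 \<longleftrightarrow> pairing_lift p X \<xi> \<eta> \<in> \<int>"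
  by (simp add: pairing_def pairing_lift_def cis_rat_eq_1_iff)

lemma pairing_lift_commute: "pairing_lift p X \<xi> \<eta> = pairing_lift p X \<eta> \<xi>"
  by (simp add: pairing_lift_def qp_prod_frac_commute disj_commute)

lemma pairing_commute: "pairing p X \<xi> \<eta> = pairing p X \<eta> \<xi>"
proof -
  have "pairing p X \<xi> \<eta> = cis (2 * pi * real_of_rat (pairing_lift p X \<xi> \<eta>))" for \<xi> \<eta>
    by (simp only: pairing_def pairing_lift_def)
  then show ?thesis
    using pairing_lift_commute[of p X \<xi> \<eta>] by simp
qed

lemma pairing_lift_cong_sum:
  assumes \<xi>: "\<xi> \<in> QpX p X" and \<eta>: "\<eta> \<in> QpX p X" and p: "p > 0"
    and J: "finite J" "{i \<in> X. \<xi> i \<notin> Zp p \<or> \<eta> i \<notin> Zp p} \<subseteq> J"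
    and den: "\<And>i n. i \<in> J \<Longrightarrow> of_nat p ^ m * \<xi> i n \<in> \<int>"
      "\<And>i n. i \<in> J \<Longrightarrow> of_nat p ^ m * \<eta> i n \<in> \<int>"
  shows "pairing_lift p X \<xi> \<eta> \<approx>\<^sub>\<int> (\<Sum>i\<in>J. \<xi> i m * \<eta> i m)"
proof -
  have "qp_prod_frac p (\<xi> i) (\<eta> i) = 0" if "i \<in> J - {i \<in> X. \<xi> i \<notin> Zp p \<or> \<eta> i \<notin> Zp p}" for i
    using that QpX_outside[OF \<xi>] QpX_outside[OF \<eta>] qp_zero_Zp[OF p] qp_prod_frac_Zp[OF _ _ p]
    by (cases "i \<in> X") auto
  then have "pairing_lift p X \<xi> \<eta> = (\<Sum>i\<in>J. qp_prod_frac p (\<xi> i) (\<eta> i))"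
    unfolding pairing_lift_def using J by (intro sum.mono_neutral_left) auto
  also have "\<dots> \<approx>\<^sub>\<int> (\<Sum>i\<in>J. \<xi> i m * \<eta> i m)"
    using qp_prod_frac_cong[OF QpX_Qp[OF \<xi> p] QpX_Qp[OF \<eta> p] p den] by (rule Ints_cong_sum)
  finally show ?thesis .
qed

lemma pairing_lift_add_right:
  assumes \<xi>: "\<xi> \<in> QpX p X" and \<eta>: "\<eta> \<in> QpX p X" and \<zeta>: "\<zeta> \<in> QpX p X" and p: "p > 0"
  shows "pairing_lift p X \<xi> (QpX_add p \<eta> \<zeta>)
    \<approx>\<^sub>\<int> pairing_lift p X \<xi> \<eta> + pairing_lift p X \<xi> \<zeta>"
proof -
  let ?s = "QpX_add p \<eta> \<zeta>"
  have s: "?s \<in> QpX p X"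
    using QpX_add_QpX[OF \<eta> \<zeta> p] .
  define J where "J = {i. \<xi> i \<notin> Zp p} \<union> {i. \<eta> i \<notin> Zp p} \<union> {i. \<zeta> i \<notin> Zp p} \<union> {i. ?s i \<notin> Zp p}"
  have J: "finite J"
    using QpX_not_Zp(2)[OF \<xi> p] QpX_not_Zp(2)[OF \<eta> p] QpX_not_Zp(2)[OF \<zeta> p] QpX_not_Zp(2)[OF s p]
    by (simp add: J_def)
  obtain m where "\<And>m' \<omega> i n. m \<le> m' \<Longrightarrow> \<omega> \<in> {\<xi>, \<eta>, \<zeta>, ?s} \<Longrightarrow> of_nat p ^ m' * \<omega> i n \<in> \<int>"
    using QpX_den_bound[of "{\<xi>, \<eta>, \<zeta>, ?s}" p X] \<xi> \<eta> \<zeta> s p by auto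
  then have den: "of_nat p ^ m * \<xi> i n \<in> \<int>" "of_nat p ^ m * \<eta> i n \<in> \<int>"
    "of_nat p ^ m * \<zeta> i n \<in> \<int>" "of_nat p ^ m * ?s i n \<in> \<int>" for i n
    by simp_all
  have "pairing_lift p X \<xi> \<eta> + pairing_lift p X \<xi> \<zeta>
      \<approx>\<^sub>\<int> (\<Sum>i\<in>J. \<xi> i m * \<eta> i m) + (\<Sum>i\<in>J. \<xi> i m * \<zeta> i m)"
    using J den by (intro Ints_cong_add pairing_lift_cong_sum[OF \<xi> _ p]) (auto simp: J_def \<eta> \<zeta>)
  then have regroup: "(\<Sum>i\<in>J. \<xi> i m * \<eta> i m) + (\<Sum>i\<in>J. \<xi> i m * \<zeta> i m)
      \<approx>\<^sub>\<int> pairing_lift p X \<xi> \<eta> + pairing_lift p X \<xi> \<zeta>"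
    by (rule Ints_cong_sym)
  have "pairing_lift p X \<xi> ?s \<approx>\<^sub>\<int> (\<Sum>i\<in>J. \<xi> i m * ?s i m)"
    using J den by (intro pairing_lift_cong_sum[OF \<xi> s p]) (auto simp: J_def)
  also have "\<dots> \<approx>\<^sub>\<int> (\<Sum>i\<in>J. \<xi> i m * \<eta> i m + \<xi> i m * \<zeta> i m)"
  proof (rule Ints_cong_sum)
    fix i
    have "\<xi> i m * ?s i m - (\<xi> i m * \<eta> i m + \<xi> i m * \<zeta> i m)
        = - (of_nat p ^ m * \<xi> i m * of_int \<lfloor>(\<eta> i m + \<zeta> i m) / of_nat p ^ m\<rfloor>)"
      by (simp add: QpX_add_def qp_add_def rmod_def algebra_simps)
    also have "\<dots> \<in> \<int>"
      using den(1) by simp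
    finally show "\<xi> i m * ?s i m \<approx>\<^sub>\<int> \<xi> i m * \<eta> i m + \<xi> i m * \<zeta> i m"
      by (simp add: Ints_cong_def)
  qed
  also have "\<dots> = (\<Sum>i\<in>J. \<xi> i m * \<eta> i m) + (\<Sum>i\<in>J. \<xi> i m * \<zeta> i m)"
    by (rule sum.distrib)
  also note regroup
  finally show ?thesis .
qed

lemma pairing_add_right:
  assumes "\<xi> \<in> QpX p X" "\<eta> \<in> QpX p X" "\<zeta> \<in> QpX p X" "p > 0"
    and "pairing p X \<xi> \<eta> = 1" "pairing p X \<xi> \<zeta> = 1"
  shows "pairing p X \<xi> (QpX_add p \<eta> \<zeta>) = 1"
  using assms Ints_cong_Ints_iff[OF pairing_lift_add_right[OF assms(1-4)]]
  by (simp add: pairing_eq_1_iff)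

section \<open>Annihilators and the topology \<open>\<tau>\<close>\<close>

definition QpX_submonoid :: "nat \<Rightarrow> 'a set \<Rightarrow> ('a \<Rightarrow> nat \<Rightarrow> rat) set \<Rightarrow> bool" where
  "QpX_submonoid p X K \<longleftrightarrow> K \<subseteq> QpX p X \<and> QpX_zero \<in> K \<and> (\<forall>\<xi>\<in>K. \<forall>\<eta>\<in>K. QpX_add p \<xi> \<eta> \<in> K)"

lemma submodule_QpX_submonoid: "submodule p X K \<Longrightarrow> QpX_submonoid p X K"
  by (simp add: submodule_def QpX_submonoid_def)

lemma perp_subset_QpX: "perp p X A \<subseteq> QpX p X"
  by (simp add: perp_def)

lemma perp_antimono: "A \<subseteq> B \<Longrightarrow> perp p X B \<subseteq> perp p X A"
  by (auto simp: perp_def)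

lemma subset_perp_perp: "A \<subseteq> QpX p X \<Longrightarrow> A \<subseteq> perp p X (perp p X A)"
  by (auto simp: perp_def pairing_commute)

lemma QpX_submonoid_perp:
  assumes A: "A \<subseteq> QpX p X" and p: "p > 0"
  shows "QpX_submonoid p X (perp p X A)"
proof -
  have "pairing_lift p X QpX_zero \<eta> = 0" for \<eta>
    by (simp add: pairing_lift_def qp_prod_frac_def QpX_zero_def qp_zero_def)
  then have "QpX_zero \<in> perp p X A"
    using QpX_zero_QpX[OF p] by (simp add: perp_def pairing_eq_1_iff)
  moreover have "QpX_add p \<xi> \<eta> \<in> perp p X A" if "\<xi> \<in> perp p X A" "\<eta> \<in> perp p X A" for \<xi> \<eta>
  proof -
    have \<xi>\<eta>: "\<xi> \<in> QpX p X" "\<eta> \<in> QpX p X"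
      using that by (simp_all add: perp_def)
    have "pairing p X a (QpX_add p \<xi> \<eta>) = 1" if "a \<in> A" for a
      using that \<open>\<xi> \<in> perp p X A\<close> \<open>\<eta> \<in> perp p X A\<close> A \<xi>\<eta> p
      by (intro pairing_add_right) (auto simp: perp_def pairing_commute)
    then show ?thesis
      using QpX_add_QpX[OF \<xi>\<eta> p] by (simp add: perp_def pairing_commute)
  qed
  ultimately show ?thesis
    by (simp add: QpX_submonoid_def perp_def)
qed

lemma pairing_lift_locally_constant:
  assumes \<xi>: "\<xi> \<in> box p X P" and \<zeta>: "\<zeta> \<in> box p X P" and \<eta>: "\<eta> \<in> QpX p X" and p: "p > 0"
    and F: "finite F" "P \<union> {i. \<eta> i \<notin> Zp p} \<subseteq> F"
    and den: "\<And>i k. of_nat p ^ n * \<xi> i k \<in> \<int>" "\<And>i k. of_nat p ^ n * \<eta> i k \<in> \<int>"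
    and agree: "\<And>i. i \<in> F \<Longrightarrow> \<zeta> i n = \<xi> i n"
  shows "pairing_lift p X \<zeta> \<eta> \<approx>\<^sub>\<int> pairing_lift p X \<xi> \<eta>"
proof -
  have QpX: "\<xi> \<in> QpX p X" "\<zeta> \<in> QpX p X"
    using \<xi> \<zeta> by (simp_all add: box_def)
  have supp: "{i \<in> X. w i \<notin> Zp p \<or> \<eta> i \<notin> Zp p} \<subseteq> F" if "w \<in> box p X P" for w
    using that F(2) by (auto simp: box_def)
  have den_\<zeta>: "of_nat p ^ n * \<zeta> i k \<in> \<int>" if "i \<in> F" for i k
  proof -
    have "of_nat p ^ n * \<zeta> i n \<in> \<int>"
      using den(1)[of i n] agree[OF that] by simp
    then show ?thesis
      by (rule Qp_Ints_mult_truncations[OF QpX_Qp[OF QpX(2) p] p])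
  qed
  have "pairing_lift p X \<xi> \<eta> \<approx>\<^sub>\<int> (\<Sum>i\<in>F. \<xi> i n * \<eta> i n)"
    using supp[OF \<xi>] den F(1) by (intro pairing_lift_cong_sum[OF QpX(1) \<eta> p]) auto
  then have \<xi>_sum: "(\<Sum>i\<in>F. \<xi> i n * \<eta> i n) \<approx>\<^sub>\<int> pairing_lift p X \<xi> \<eta>"
    by (rule Ints_cong_sym)
  have "pairing_lift p X \<zeta> \<eta> \<approx>\<^sub>\<int> (\<Sum>i\<in>F. \<zeta> i n * \<eta> i n)"
    using supp[OF \<zeta>] den_\<zeta> den(2) F(1) by (intro pairing_lift_cong_sum[OF QpX(2) \<eta> p]) auto
  also have "\<dots> = (\<Sum>i\<in>F. \<xi> i n * \<eta> i n)"
    using agree by simp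
  also note \<xi>_sum
  finally show ?thesis .
qed

lemma perp_tau_closed:
  assumes A: "A \<subseteq> QpX p X" and p: "p > 0"
  shows "tau_closed p X (perp p X A)"
  unfolding tau_closed_def tau_open_def
proof (intro conjI perp_subset_QpX Diff_subset allI impI ballI)
  fix P \<xi> assume P: "finite P \<and> P \<subseteq> X" and \<xi>P: "\<xi> \<in> (QpX p X - perp p X A) \<inter> box p X P"
  then have \<xi>: "\<xi> \<in> QpX p X"
    by blast
  obtain \<eta> where \<eta>: "\<eta> \<in> A" "pairing_lift p X \<xi> \<eta> \<notin> \<int>"
    using \<xi>P by (auto simp: perp_def pairing_eq_1_iff)
  have \<eta>X: "\<eta> \<in> QpX p X"
    using \<eta>(1) A by blast
  define F where "F = P \<union> {i. \<eta> i \<notin> Zp p}"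
  have F: "finite F" "F \<subseteq> X"
    using P QpX_not_Zp[OF \<eta>X p] by (auto simp: F_def)
  obtain n where "\<And>m \<omega> i k. n \<le> m \<Longrightarrow> \<omega> \<in> {\<xi>, \<eta>} \<Longrightarrow> of_nat p ^ m * \<omega> i k \<in> \<int>"
    using QpX_den_bound[of "{\<xi>, \<eta>}" p X] \<xi> \<eta>X p by auto
  then have den: "of_nat p ^ n * \<xi> i k \<in> \<int>" "of_nat p ^ n * \<eta> i k \<in> \<int>" for i k
    by simp_all
  have "\<zeta> \<in> QpX p X - perp p X A" if \<zeta>: "\<zeta> \<in> box p X P" "\<forall>i\<in>F. \<zeta> i n = \<xi> i n" for \<zeta>
  proof -
    have "P \<union> {i. \<eta> i \<notin> Zp p} \<subseteq> F"
      by (simp add: F_def)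
    with \<xi>P have "pairing_lift p X \<zeta> \<eta> \<approx>\<^sub>\<int> pairing_lift p X \<xi> \<eta>"
      using \<zeta> den by (intro pairing_lift_locally_constant[OF _ \<zeta>(1) \<eta>X p F(1)]) auto
    then have "pairing_lift p X \<zeta> \<eta> \<notin> \<int>"
      using \<eta>(2) Ints_cong_Ints_iff by blast
    then show ?thesis
      using \<zeta>(1) \<eta>(1) by (auto simp: perp_def pairing_eq_1_iff box_def)
  qed
  then show "\<exists>F n. finite F \<and> F \<subseteq> X \<and> {\<eta> \<in> box p X P. \<forall>i\<in>F. \<eta> i n = \<xi> i n} \<subseteq> QpX p X - perp p X A"
    using F by blast
qed

section \<open>Truncations\<close>

definition trunc_level :: "'a set \<Rightarrow> nat \<Rightarrow> 'a \<Rightarrow> nat" where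
  "trunc_level F n i = (if i \<in> F then n else 0)"

text \<open>\<open>trunc F n \<xi>\<close> records each \<open>\<xi>\<^sub>i\<close> modulo \<open>p\<^sup>n\<int>\<^sub>p\<close> for \<open>i \<in> F\<close> and modulo \<open>\<int>\<^sub>p\<close> otherwise. Its fibres are
  the basic \<open>\<tau>\<close>-neighbourhoods, and modulo \<open>trunc_lattice\<close> it is additive, so it maps
  \<open>\<rat>\<^sub>p(X)\<close> into the torsion group \<open>\<rat>\<^sup>X / trunc_lattice\<close> where characters can be constructed.\<close>
definition trunc :: "'a set \<Rightarrow> nat \<Rightarrow> ('a \<Rightarrow> nat \<Rightarrow> rat) \<Rightarrow> 'a \<Rightarrow> rat" where
  "trunc F n \<xi> i = \<xi> i (trunc_level F n i)"

definition trunc_lattice :: "nat \<Rightarrow> 'a set \<Rightarrow> nat \<Rightarrow> ('a \<Rightarrow> rat) set" where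
  "trunc_lattice p F n = {t. \<forall>i. t i / of_nat p ^ trunc_level F n i \<in> \<int>}"

lemma add_subgroup_trunc_lattice: "add_subgroup (trunc_lattice p F n)"
  by (auto simp: add_subgroup_def trunc_lattice_def add_divide_distrib)

lemma trunc_QpX_add: "trunc F n (QpX_add p \<xi> \<eta>) - (trunc F n \<xi> + trunc F n \<eta>) \<in> trunc_lattice p F n"
proof -
  have "(rmod a m - a) / m \<in> \<int>" for a m :: rat
    using Ints_minus[OF rmod_diff_Ints[of a m]] by (simp add: minus_divide_left)
  then show ?thesis
    by (simp add: trunc_lattice_def trunc_def QpX_add_def qp_add_def)
qed

lemma trunc_QpX_zero: "trunc F n QpX_zero = 0"
  by (simp add: trunc_def QpX_zero_def qp_zero_def fun_eq_iff)

lemma trunc_eq_if_lattice: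
  assumes "\<xi> \<in> QpX p X" "\<eta> \<in> QpX p X" "p > 0" and "trunc F n \<xi> - trunc F n \<eta> \<in> trunc_lattice p F n"
  shows "trunc F n \<xi> = trunc F n \<eta>"
proof
  fix i
  let ?m = "of_nat p ^ trunc_level F n i :: rat"
  have "rmod (\<xi> i (trunc_level F n i)) ?m = \<eta> i (trunc_level F n i)"
    "rmod (\<xi> i (trunc_level F n i)) ?m = \<xi> i (trunc_level F n i)"
    using assms Qp_digit_bounds[OF QpX_Qp] by (auto intro!: rmod_unique simp: trunc_lattice_def trunc_def)
  then show "trunc F n \<xi> i = trunc F n \<eta> i"
    by (simp add: trunc_def)
qed

lemma of_nat_mult_fun_apply: "(of_nat k * t) i = (of_nat k :: rat) * t i"
  unfolding times_fun_apply of_nat_fun_apply ..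

lemma trunc_torsion:
  assumes \<xi>: "\<xi> \<in> QpX p X" and p: "p > 0"
  obtains N where "of_nat (p ^ N) * trunc F n \<xi> \<in> trunc_lattice p F n"
proof -
  obtain d where "\<And>m \<omega> i k. d \<le> m \<Longrightarrow> \<omega> \<in> {\<xi>} \<Longrightarrow> of_nat p ^ m * \<omega> i k \<in> \<int>"
    using QpX_den_bound[of "{\<xi>}" p X] \<xi> p by blast
  then have d: "d \<le> m \<Longrightarrow> of_nat p ^ m * \<xi> i k \<in> \<int>" for m i k
    by blast
  have "of_nat (p ^ (d + n)) * trunc F n \<xi> \<in> trunc_lattice p F n"
    unfolding trunc_lattice_def mem_Collect_eq of_nat_mult_fun_apply
  proof
    fix i
    define l where "l = trunc_level F n i"
    have "l \<le> n"
      by (simp add: l_def trunc_level_def)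
    then have "of_nat (p ^ (d + n)) * trunc F n \<xi> i / of_nat p ^ l = of_nat p ^ (d + n - l) * \<xi> i l"
      using p by (simp add: trunc_def l_def[symmetric] power_diff)
    also have "\<dots> \<in> \<int>"
      using \<open>l \<le> n\<close> by (intro d) simp
    finally show "of_nat (p ^ (d + n)) * trunc F n \<xi> i / of_nat p ^ trunc_level F n i \<in> \<int>"
      by (simp add: l_def)
  qed
  then show thesis
    by (rule that)
qed

lemma sum_fun_upd_zero:
  "finite J \<Longrightarrow> (\<Sum>i\<in>J. 0(i := f i)) = (\<lambda>j. if j \<in> J then f j else 0 :: 'b::comm_monoid_add)"
  by (induction J rule: finite_induct) (auto simp: fun_eq_iff)

lemma trunc_eq_sum:
  assumes \<xi>: "\<xi> \<in> QpX p X" and p: "p > 0" and J: "finite J" "{i. \<xi> i \<notin> Zp p} \<union> (F \<inter> X) \<subseteq> J"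
  shows "trunc F n \<xi> = (\<Sum>i\<in>J. 0(i := \<xi> i (trunc_level F n i)))"
proof -
  have "\<xi> j (trunc_level F n j) = 0" if "j \<notin> J" for j
  proof (cases "j \<in> X")
    case True
    then have "\<xi> j \<in> Zp p" "trunc_level F n j = 0"
      using that J(2) by (auto simp: trunc_level_def)
    then show ?thesis
      by (simp add: Zp_def)
  next
    case False
    then show ?thesis
      using QpX_outside[OF \<xi>] by (simp add: qp_zero_def)
  qed
  then show ?thesis
    by (auto simp: sum_fun_upd_zero[OF J(1)] trunc_def fun_eq_iff)
qed

lemma trunc_eq_in_box:
  assumes \<xi>: "\<xi> \<in> box p X P" and s: "s \<in> QpX p X" and p: "p > 0"
    and eq: "trunc F n s = trunc F n \<xi>"
  shows "s \<in> box p X P"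
proof -
  have "s j \<in> Zp p" if j: "j \<in> X - P" for j
  proof -
    have "\<xi> j \<in> Zp p" and \<xi>X: "\<xi> \<in> QpX p X"
      using \<xi> j by (simp_all add: box_def)
    then have "\<xi> j (trunc_level F n j) \<in> \<int>"
      using Zp_iff_Ints[OF QpX_Qp[OF \<xi>X p, of j] p] by blast
    then have "of_nat p ^ 0 * s j (trunc_level F n j) \<in> \<int>"
      using fun_cong[OF eq, of j] by (simp add: trunc_def)
    then have "\<forall>k. s j k \<in> \<int>"
      using Qp_Ints_mult_truncations[OF QpX_Qp[OF s p, of j] p, of 0 "trunc_level F n j"] by simp
    then show ?thesis
      using Zp_iff_Ints[OF QpX_Qp[OF s p] p] by simp
  qed
  then show ?thesis
    using s by (simp add: box_def)
qed

lemma tau_closed_separated_by_trunc: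
  assumes C: "tau_closed p X C" and \<xi>: "\<xi> \<in> QpX p X" "\<xi> \<notin> C" and p: "p > 0"
  obtains F n where "finite F" "\<And>s. s \<in> C \<Longrightarrow> trunc F n s \<noteq> trunc F n \<xi>"
proof -
  define P where "P = {i \<in> X. \<xi> i \<notin> Zp p}"
  have P: "finite P" "P \<subseteq> X"
    using \<xi>(1) by (auto simp: P_def QpX_def)
  have \<xi>_in: "\<xi> \<in> (QpX p X - C) \<inter> box p X P"
    using \<xi> by (auto simp: box_def P_def)
  have "\<forall>P. finite P \<and> P \<subseteq> X \<longrightarrow> (\<forall>\<xi> \<in> (QpX p X - C) \<inter> box p X P. \<exists>F n. finite F \<and> F \<subseteq> X \<and>
      {\<eta> \<in> box p X P. \<forall>i\<in>F. \<eta> i n = \<xi> i n} \<subseteq> QpX p X - C)"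
    using C by (simp add: tau_closed_def tau_open_def)
  then have "\<exists>F n. finite F \<and> F \<subseteq> X \<and> {\<eta> \<in> box p X P. \<forall>i\<in>F. \<eta> i n = \<xi> i n} \<subseteq> QpX p X - C"
    using P \<xi>_in by simp
  then obtain F n where F: "finite F"
    and nbhd: "{\<eta> \<in> box p X P. \<forall>i\<in>F. \<eta> i n = \<xi> i n} \<subseteq> QpX p X - C"
    by blast
  have "trunc F n s \<noteq> trunc F n \<xi>" if s: "s \<in> C" for s
  proof
    assume eq: "trunc F n s = trunc F n \<xi>"
    have "s \<in> QpX p X"
      using C s by (auto simp: tau_closed_def)
    then have "s \<in> box p X P"
      using trunc_eq_in_box \<xi>_in p eq by blast
    moreover have "s i n = \<xi> i n" if "i \<in> F" for i
      using fun_cong[OF eq, of i] that by (simp add: trunc_def trunc_level_def)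
    ultimately show False
      using nbhd s by blast
  qed
  with F show thesis
    by (rule that)
qed

section \<open>Separation by characters\<close>

text \<open>A character \<open>\<chi>\<close> that is defined on the points \<open>e\<^sub>i / p\<^sup>m\<close> and trivial on \<open>trunc_lattice\<close> is
  represented by a vector of \<open>\<rat>\<^sub>p(X)\<close>: pairing with it computes \<open>\<chi>\<close> on truncations.\<close>
locale truncation_character =
  fixes p :: nat and X F :: "'a set" and n :: nat and H :: "('a \<Rightarrow> rat) set" and \<chi> :: "('a \<Rightarrow> rat) \<Rightarrow> rat"
  assumes p: "p > 0" and F: "finite F"
    and H: "add_subgroup H" and \<chi>: "character H \<chi>"
    and basis: "\<And>i m. i \<in> X \<Longrightarrow> 0(i := 1 / of_nat p ^ m) \<in> H"
    and lattice: "trunc_lattice p F n \<subseteq> H" "\<And>t. t \<in> trunc_lattice p F n \<Longrightarrow> \<chi> t \<approx>\<^sub>\<int> 0"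
begin

text \<open>The coordinate \<open>\<eta>\<^sub>i\<close> is chosen with \<open>\<eta>\<^sub>i / p\<^sup>m \<equiv> \<chi>(e\<^sub>i / p\<^sup>m)\<close> modulo \<open>\<int>\<close>.\<close>
definition dual :: "'a \<Rightarrow> nat \<Rightarrow> rat" where
  "dual i = (if i \<in> X then (\<lambda>m. of_nat p ^ m * frac (\<chi> (0(i := 1 / of_nat p ^ m)))) else qp_zero)"

lemma of_int_mult_basis: "of_int a * 0(i := r) = 0(i := of_int a * r :: rat)"
  by (simp add: fun_eq_iff)

lemma character_basis_of_int_mult:
  assumes "i \<in> X"
  shows "\<chi> (0(i := of_int a / of_nat p ^ m)) \<approx>\<^sub>\<int> of_int a * \<chi> (0(i := 1 / of_nat p ^ m))"
  using character_of_int_mult[OF H \<chi> basis[OF assms], of a] by (simp add: of_int_mult_basis)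

lemma dual_QpX: "dual \<in> QpX p X"
proof -
  have den: "of_nat p ^ (m + trunc_level F n i) * \<chi> (0(i := 1 / of_nat p ^ m)) \<in> \<int>"
    if i: "i \<in> X" for i m
  proof -
    have "0(i := of_int (int (p ^ (m + trunc_level F n i))) / of_nat p ^ m)
        = 0(i := of_nat p ^ trunc_level F n i :: rat)"
      using p by (simp add: power_add)
    moreover have "0(i := of_nat p ^ trunc_level F n i :: rat) \<in> trunc_lattice p F n"
      using p by (simp add: trunc_lattice_def)
    ultimately have "\<chi> (0(i := of_int (int (p ^ (m + trunc_level F n i))) / of_nat p ^ m)) \<approx>\<^sub>\<int> 0"
      using lattice(2) by simp
    then show ?thesis
      using Ints_cong_Ints_iff[OF character_basis_of_int_mult[OF i, of "int (p ^ (m + trunc_level F n i))" m]]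
      by simp
  qed
  have compatible: "of_nat p * \<chi> (0(i := 1 / of_nat p ^ Suc m)) \<approx>\<^sub>\<int> \<chi> (0(i := 1 / of_nat p ^ m))"
    if i: "i \<in> X" for i m
  proof -
    have "0(i := of_int (int p) / of_nat p ^ Suc m) = 0(i := 1 / of_nat p ^ m :: rat)"
      using p by simp
    then show ?thesis
      using Ints_cong_sym[OF character_basis_of_int_mult[OF i, of "int p" "Suc m"]] by simp
  qed
  have Qp: "dual i \<in> Qp p" and Zp: "i \<notin> F \<Longrightarrow> dual i \<in> Zp p" if "i \<in> X" for i
    using Qp_of_compatible_fracs[OF p, of "trunc_level F n i"] den[OF that] compatible[OF that]
    by (simp_all add: dual_def that trunc_level_def)
  have "{i \<in> X. dual i \<notin> Zp p} \<subseteq> F"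
    using Zp by blast
  then have "finite {i \<in> X. dual i \<notin> Zp p}"
    using F by (rule finite_subset)
  then show ?thesis
    using Qp by (simp add: QpX_def dual_def)
qed

lemma dual_digit:
  assumes i: "i \<in> X" and r: "of_nat p ^ m * r \<in> \<int>"
  shows "r * dual i m \<approx>\<^sub>\<int> \<chi> (0(i := r))"
proof -
  obtain a where a: "of_nat p ^ m * r = of_int a"
    using r by (auto elim: Ints_cases)
  have "r * dual i m = of_int a * frac (\<chi> (0(i := 1 / of_nat p ^ m)))"
    using i a by (simp add: dual_def algebra_simps)
  also have "\<dots> \<approx>\<^sub>\<int> of_int a * \<chi> (0(i := 1 / of_nat p ^ m))"
    by (rule Ints_cong_mult_left[OF frac_Ints_cong]) simp
  also have "\<dots> \<approx>\<^sub>\<int> \<chi> (0(i := of_int a / of_nat p ^ m))"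
    using character_basis_of_int_mult[OF i] by (rule Ints_cong_sym)
  also have "of_int a / of_nat p ^ m = r"
    using a p by (simp add: field_simps)
  finally show ?thesis .
qed

lemma character_single_trunc:
  assumes s: "s \<in> QpX p X" and i: "i \<in> X" and m: "n \<le> m" "of_nat p ^ m * s i m \<in> \<int>"
  shows "0(i := s i (trunc_level F n i)) \<in> H"
    and "s i m * dual i m \<approx>\<^sub>\<int> \<chi> (0(i := s i (trunc_level F n i)))"
proof -
  let ?l = "trunc_level F n i"
  obtain a where "of_nat p ^ m * s i m = of_int a"
    using m(2) by (auto elim: Ints_cases)
  then have "s i m = of_int a / of_nat p ^ m"
    using p by (simp add: field_simps)
  then have "0(i := s i m) = of_int a * 0(i := 1 / of_nat p ^ m)"
    by (simp add: of_int_mult_basis)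
  then have top: "0(i := s i m) \<in> H"
    using add_subgroup_of_int_mult[OF H basis[OF i]] by simp
  have "?l \<le> m"
    using m(1) by (simp add: trunc_level_def)
  then have diff: "0(i := s i m) - 0(i := s i ?l) \<in> trunc_lattice p F n"
    using Qp_truncation_cong[OF QpX_Qp[OF s p] p] by (simp add: trunc_lattice_def)
  show low: "0(i := s i ?l) \<in> H"
    using add_subgroup_diff[OF H top lattice(1)[THEN subsetD, OF diff]] by simp
  have "s i m * dual i m \<approx>\<^sub>\<int> \<chi> (0(i := s i m))"
    by (rule dual_digit[OF i m(2)])
  also have "\<chi> (0(i := s i m)) - \<chi> (0(i := s i ?l)) \<approx>\<^sub>\<int> \<chi> (0(i := s i m) - 0(i := s i ?l))"
    using character_diff[OF H \<chi> top low] by (rule Ints_cong_sym)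
  then have "\<chi> (0(i := s i m)) - \<chi> (0(i := s i ?l)) \<approx>\<^sub>\<int> 0"
    using lattice(2)[OF diff] by (rule Ints_cong_trans)
  then have "\<chi> (0(i := s i m)) \<approx>\<^sub>\<int> \<chi> (0(i := s i ?l))"
    by (simp add: Ints_cong_def)
  finally show "s i m * dual i m \<approx>\<^sub>\<int> \<chi> (0(i := s i ?l))" .
qed

lemma pairing_lift_dual:
  assumes s: "s \<in> QpX p X"
  shows "trunc F n s \<in> H" "pairing_lift p X s dual \<approx>\<^sub>\<int> \<chi> (trunc F n s)"
proof -
  define J where "J = {i. s i \<notin> Zp p} \<union> {i. dual i \<notin> Zp p} \<union> (F \<inter> X)"
  have J: "finite J" "J \<subseteq> X"
    using QpX_not_Zp[OF s p] QpX_not_Zp[OF dual_QpX p] F by (auto simp: J_def)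
  obtain d where d: "\<And>m \<omega> i k. d \<le> m \<Longrightarrow> \<omega> \<in> {s, dual} \<Longrightarrow> of_nat p ^ m * \<omega> i k \<in> \<int>"
    using QpX_den_bound[of "{s, dual}" p X] s dual_QpX p by auto
  define m where "m = n + d"
  have d1: "of_nat p ^ m * s i k \<in> \<int>" and d2: "of_nat p ^ m * dual i k \<in> \<int>" for i k
    using d[of m] by (simp_all add: m_def)
  have single: "0(i := s i (trunc_level F n i)) \<in> H"
    "s i m * dual i m \<approx>\<^sub>\<int> \<chi> (0(i := s i (trunc_level F n i)))" if i: "i \<in> J" for i
  proof -
    have "i \<in> X" "n \<le> m" "of_nat p ^ m * s i m \<in> \<int>"
      using i J(2) d1 by (auto simp: m_def)
    then show "0(i := s i (trunc_level F n i)) \<in> H"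
      "s i m * dual i m \<approx>\<^sub>\<int> \<chi> (0(i := s i (trunc_level F n i)))"
      by (rule character_single_trunc[OF s])+
  qed
  have trunc_sum: "trunc F n s = (\<Sum>i\<in>J. 0(i := s i (trunc_level F n i)))"
    using J(1) by (intro trunc_eq_sum[OF s p]) (auto simp: J_def)
  then show "trunc F n s \<in> H"
    using add_subgroup_sum[OF H single(1)] by simp
  have "pairing_lift p X s dual \<approx>\<^sub>\<int> (\<Sum>i\<in>J. s i m * dual i m)"
    using J(1) d1 d2 by (intro pairing_lift_cong_sum[OF s dual_QpX p]) (auto simp: J_def m_def)
  also have "\<dots> \<approx>\<^sub>\<int> (\<Sum>i\<in>J. \<chi> (0(i := s i (trunc_level F n i))))"
    using single(2) by (rule Ints_cong_sum)
  also have "\<chi> (trunc F n s) \<approx>\<^sub>\<int> (\<Sum>i\<in>J. \<chi> (0(i := s i (trunc_level F n i))))"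
    unfolding trunc_sum using single(1) by (rule character_sum[OF H \<chi>])
  then have "(\<Sum>i\<in>J. \<chi> (0(i := s i (trunc_level F n i)))) \<approx>\<^sub>\<int> \<chi> (trunc F n s)"
    by (rule Ints_cong_sym)
  finally show "pairing_lift p X s dual \<approx>\<^sub>\<int> \<chi> (trunc F n s)" .
qed

end

definition trunc_image :: "nat \<Rightarrow> 'a set \<Rightarrow> nat \<Rightarrow> ('a \<Rightarrow> nat \<Rightarrow> rat) set \<Rightarrow> ('a \<Rightarrow> rat) set" where
  "trunc_image p F n S = {trunc F n s + t | s t. s \<in> S \<and> t \<in> trunc_lattice p F n}"

lemma trunc_in_trunc_image: "s \<in> S \<Longrightarrow> trunc F n s \<in> trunc_image p F n S"
  unfolding trunc_image_def using add_subgroup_zero[OF add_subgroup_trunc_lattice]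
  by (intro CollectI exI[of _ s] exI[of _ 0]) simp

lemma trunc_lattice_subset_trunc_image: "QpX_zero \<in> S \<Longrightarrow> trunc_lattice p F n \<subseteq> trunc_image p F n S"
  unfolding trunc_image_def by (auto intro!: exI[of _ QpX_zero] simp: trunc_QpX_zero)

lemma trunc_image_trunc:
  assumes "S \<subseteq> QpX p X" "\<xi> \<in> QpX p X" "p > 0" and "trunc F n \<xi> \<in> trunc_image p F n S"
  obtains s where "s \<in> S" "trunc F n s = trunc F n \<xi>"
proof -
  obtain s t where t: "trunc F n \<xi> = trunc F n s + t" "s \<in> S" "t \<in> trunc_lattice p F n"
    using assms(4) by (auto simp: trunc_image_def)
  then have "trunc F n s - trunc F n \<xi> \<in> trunc_lattice p F n"
    using add_subgroup_minus[OF add_subgroup_trunc_lattice] by simp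
  then show thesis
    using that[OF t(2)] trunc_eq_if_lattice[OF subsetD[OF assms(1) t(2)] assms(2,3)] by blast
qed

lemma add_subgroup_trunc_image:
  assumes p: "p > 0" and S: "QpX_submonoid p X S"
  shows "add_subgroup (trunc_image p F n S)"
proof (rule add_subgroupI_torsion)
  let ?L = "trunc_lattice p F n"
  note L = add_subgroup_trunc_lattice[of p F n]
  have L_T: "?L \<subseteq> trunc_image p F n S"
    using S by (intro trunc_lattice_subset_trunc_image) (simp add: QpX_submonoid_def)
  then show "0 \<in> trunc_image p F n S"
    using add_subgroup_zero[OF L] by blast
  fix x assume "x \<in> trunc_image p F n S"
  then obtain s t where x: "x = trunc F n s + t" "s \<in> S" "t \<in> ?L"
    by (auto simp: trunc_image_def)
  {
    fix y assume "y \<in> trunc_image p F n S"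
    then obtain s' t' where y: "y = trunc F n s' + t'" "s' \<in> S" "t' \<in> ?L"
      by (auto simp: trunc_image_def)
    let ?d = "trunc F n (QpX_add p s s') - (trunc F n s + trunc F n s')"
    have "x + y = trunc F n (QpX_add p s s') + ((t + t') - ?d)"
      using x y by (simp add: algebra_simps)
    moreover have "(t + t') - ?d \<in> ?L"
      using add_subgroup_diff[OF L add_subgroup_add[OF L x(3) y(3)] trunc_QpX_add] .
    moreover have "QpX_add p s s' \<in> S"
      using S x(2) y(2) by (simp add: QpX_submonoid_def)
    ultimately show "x + y \<in> trunc_image p F n S"
      unfolding trunc_image_def by blast
  }
  have "s \<in> QpX p X"
    using S x(2) by (auto simp: QpX_submonoid_def)
  then obtain N where N: "of_nat (p ^ N) * trunc F n s \<in> ?L"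
    using trunc_torsion[OF _ p] by blast
  have "of_nat (p ^ N) * t \<in> ?L"
    using add_subgroup_of_int_mult[OF L x(3), of "int (p ^ N)"] by simp
  then have "of_nat (p ^ N) * x \<in> ?L"
    unfolding x(1) distrib_left by (rule add_subgroup_add[OF L N])
  then have "- (of_nat (p ^ N) * x) \<in> trunc_image p F n S"
    using add_subgroup_minus[OF L] L_T by blast
  then show "\<exists>N>0. - (of_nat N * x) \<in> trunc_image p F n S"
    using p by (intro exI[of _ "p ^ N"]) simp
qed

lemma exists_dual_separating_trunc:
  assumes p: "p > 0" and X: "countable X" and S: "QpX_submonoid p X S"
    and F: "finite F" and \<xi>: "\<xi> \<in> QpX p X" and separated: "\<And>s. s \<in> S \<Longrightarrow> trunc F n s \<noteq> trunc F n \<xi>"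
  obtains \<eta> where "\<eta> \<in> QpX p X" "\<And>s. s \<in> S \<Longrightarrow> pairing p X s \<eta> = 1" "pairing p X \<xi> \<eta> \<noteq> 1"
proof -
  let ?T = "trunc_image p F n S"
  have SX: "S \<subseteq> QpX p X" and "QpX_zero \<in> S"
    using S by (simp_all add: QpX_submonoid_def)
  then have L_T: "trunc_lattice p F n \<subseteq> ?T"
    by (intro trunc_lattice_subset_trunc_image)
  have u: "trunc F n \<xi> \<notin> ?T"
    using trunc_image_trunc[OF SX \<xi> p] separated by metis
  obtain N where N: "of_nat (p ^ N) * trunc F n \<xi> \<in> ?T"
    using trunc_torsion[OF \<xi> p] L_T by blast
  have "countable {0(i := 1 / of_nat p ^ m) | i m. i \<in> X}"
  proof -
    have eq: "{0(i := 1 / of_nat p ^ m) | i m. i \<in> X} = (\<lambda>(i, m). 0(i := 1 / of_nat p ^ m)) ` (X \<times> UNIV)"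
      by auto
    have "countable (X \<times> (UNIV :: nat set))"
      using X by simp
    then show ?thesis
      unfolding eq by (rule countable_image)
  qed
  moreover have "p ^ N > 0"
    using p by simp
  ultimately obtain H \<chi> where H: "add_subgroup H" "?T \<subseteq> H" "{0(i := 1 / of_nat p ^ m) | i m. i \<in> X} \<subseteq> H"
    "character H \<chi>" "\<And>t. t \<in> ?T \<Longrightarrow> \<chi> t \<approx>\<^sub>\<int> 0" "\<not> \<chi> (trunc F n \<xi>) \<approx>\<^sub>\<int> 0"
    using character_separating[OF add_subgroup_trunc_image[OF p S] u _ N] by blast
  interpret dual: truncation_character p X F n H \<chi>
    using p F H L_T by unfold_locales blast+
  show thesis
  proof (rule that[OF dual.dual_QpX])
    fix s assume s: "s \<in> S"
    then have "pairing_lift p X s dual.dual \<approx>\<^sub>\<int> 0"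
      using Ints_cong_trans[OF dual.pairing_lift_dual(2) H(5)[OF trunc_in_trunc_image[OF s]]] SX by blast
    then show "pairing p X s dual.dual = 1"
      by (simp add: pairing_eq_1_iff)
  next
    show "pairing p X \<xi> dual.dual \<noteq> 1"
      using Ints_cong_Ints_iff[OF dual.pairing_lift_dual(2)[OF \<xi>]] H(6) by (simp add: pairing_eq_1_iff)
  qed
qed

lemma exists_dual_separating:
  assumes "p > 0" "countable X" "QpX_submonoid p X S"
    and "tau_closed p X C" "S \<subseteq> C" and "\<xi> \<in> QpX p X" "\<xi> \<notin> C"
  obtains \<eta> where "\<eta> \<in> QpX p X" "\<And>s. s \<in> S \<Longrightarrow> pairing p X s \<eta> = 1" "pairing p X \<xi> \<eta> \<noteq> 1"
proof -
  obtain F n where F: "finite F" and separated: "\<And>s. s \<in> C \<Longrightarrow> trunc F n s \<noteq> trunc F n \<xi>"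
    using tau_closed_separated_by_trunc[OF assms(4,6,7,1)] by blast
  show thesis
    using exists_dual_separating_trunc[OF assms(1-3) F assms(6)] separated assms(5) that by blast
qed

section \<open>Duality\<close>

lemma perp_perp_eq:
  assumes p: "p > 0" and X: "countable X" and K: "QpX_submonoid p X K" "tau_closed p X K"
  shows "perp p X (perp p X K) = K"
proof
  have KX: "K \<subseteq> QpX p X"
    using K(1) by (simp add: QpX_submonoid_def)
  show "K \<subseteq> perp p X (perp p X K)"
    using subset_perp_perp[OF KX] .
  show "perp p X (perp p X K) \<subseteq> K"
  proof
    fix \<xi> assume \<xi>: "\<xi> \<in> perp p X (perp p X K)"
    show "\<xi> \<in> K"
    proof (rule ccontr)
      assume "\<xi> \<notin> K"
      then obtain \<eta> where \<eta>: "\<eta> \<in> QpX p X" "\<And>s. s \<in> K \<Longrightarrow> pairing p X s \<eta> = 1" "pairing p X \<xi> \<eta> \<noteq> 1"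
        using exists_dual_separating[OF p X K(1) K(2) subset_refl] \<xi> perp_subset_QpX by blast
      then have "\<eta> \<in> perp p X K"
        by (simp add: perp_def pairing_commute)
      then show False
        using \<xi> \<eta>(3) by (simp add: perp_def)
    qed
  qed
qed

lemma perp_setsum:
  assumes K: "QpX_submonoid p X K" and L: "QpX_submonoid p X L" and p: "p > 0"
  shows "perp p X (setsum_QpX p K L) = perp p X K \<inter> perp p X L"
proof
  have "K \<subseteq> setsum_QpX p K L"
  proof
    fix k assume "k \<in> K"
    moreover have "k \<in> QpX p X"
      using \<open>k \<in> K\<close> K by (auto simp: QpX_submonoid_def)
    then have "k = QpX_add p k QpX_zero"
      by (rule QpX_add_zero[OF _ p, symmetric])
    ultimately show "k \<in> setsum_QpX p K L"
      using L unfolding QpX_submonoid_def setsum_QpX_def by blast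
  qed
  moreover have "L \<subseteq> setsum_QpX p K L"
  proof
    fix l assume "l \<in> L"
    moreover have "l \<in> QpX p X"
      using \<open>l \<in> L\<close> L by (auto simp: QpX_submonoid_def)
    then have "l = QpX_add p QpX_zero l"
      by (subst QpX_add_commute) (rule QpX_add_zero[OF _ p, symmetric])
    ultimately show "l \<in> setsum_QpX p K L"
      using K unfolding QpX_submonoid_def setsum_QpX_def by blast
  qed
  ultimately show "perp p X (setsum_QpX p K L) \<subseteq> perp p X K \<inter> perp p X L"
    using perp_antimono by blast
  show "perp p X K \<inter> perp p X L \<subseteq> perp p X (setsum_QpX p K L)"
  proof
    fix \<xi> assume \<xi>: "\<xi> \<in> perp p X K \<inter> perp p X L"
    have "pairing p X \<xi> (QpX_add p k l) = 1" if "k \<in> K" "l \<in> L" for k l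
      using that \<xi> K L p by (intro pairing_add_right) (auto simp: perp_def QpX_submonoid_def)
    then show "\<xi> \<in> perp p X (setsum_QpX p K L)"
      using \<xi> by (auto simp: perp_def setsum_QpX_def)
  qed
qed

lemma QpX_submonoid_setsum:
  assumes K: "QpX_submonoid p X K" and L: "QpX_submonoid p X L" and p: "p > 0"
  shows "QpX_submonoid p X (setsum_QpX p K L)"
proof -
  have KL: "K \<subseteq> QpX p X" "L \<subseteq> QpX p X" "QpX_zero \<in> K" "QpX_zero \<in> L"
    "\<And>a b. a \<in> K \<Longrightarrow> b \<in> K \<Longrightarrow> QpX_add p a b \<in> K" "\<And>a b. a \<in> L \<Longrightarrow> b \<in> L \<Longrightarrow> QpX_add p a b \<in> L"
    using K L by (simp_all add: QpX_submonoid_def)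
  have "setsum_QpX p K L \<subseteq> QpX p X"
    using QpX_add_QpX[OF subsetD[OF KL(1)] subsetD[OF KL(2)] p] by (auto simp: setsum_QpX_def)
  moreover have "QpX_zero \<in> setsum_QpX p K L"
  proof -
    have "QpX_add p QpX_zero QpX_zero \<in> setsum_QpX p K L"
      unfolding setsum_QpX_def using KL(3,4) by blast
    then show ?thesis
      by (simp only: QpX_add_zero[OF QpX_zero_QpX[OF p, of X] p])
  qed
  moreover have "QpX_add p \<xi> \<eta> \<in> setsum_QpX p K L"
    if sums: "\<xi> \<in> setsum_QpX p K L" "\<eta> \<in> setsum_QpX p K L" for \<xi> \<eta>
  proof -
    obtain k l k' l' where "\<xi> = QpX_add p k l" "\<eta> = QpX_add p k' l'" "k \<in> K" "l \<in> L" "k' \<in> K" "l' \<in> L"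
      using sums by (auto simp: setsum_QpX_def)
    moreover have "QpX_add p (QpX_add p k l) (QpX_add p k' l') = QpX_add p (QpX_add p k k') (QpX_add p l l')"
      using p by (simp only: QpX_add_assoc QpX_add_commute QpX_add_left_commute)
    ultimately show ?thesis
      using KL(5,6) unfolding setsum_QpX_def by blast
  qed
  ultimately show ?thesis
    by (simp add: QpX_submonoid_def)
qed

lemma perp_Int_eq_closure:
  assumes p: "p > 0" and X: "countable X"
    and K: "QpX_submonoid p X K" "tau_closed p X K" and L: "QpX_submonoid p X L" "tau_closed p X L"
  shows "perp p X (K \<inter> L) = tau_closure p X (setsum_QpX p (perp p X K) (perp p X L))"
    (is "_ = tau_closure p X ?S")
proof
  have KX: "K \<subseteq> QpX p X" and LX: "L \<subseteq> QpX p X"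
    using K(1) L(1) by (simp_all add: QpX_submonoid_def)
  have S: "QpX_submonoid p X ?S"
    using QpX_submonoid_setsum[OF QpX_submonoid_perp[OF KX p] QpX_submonoid_perp[OF LX p] p] .
  have "perp p X ?S = perp p X (perp p X K) \<inter> perp p X (perp p X L)"
    using perp_setsum[OF QpX_submonoid_perp[OF KX p] QpX_submonoid_perp[OF LX p] p] .
  also have "\<dots> = K \<inter> L"
    using perp_perp_eq[OF p X K] perp_perp_eq[OF p X L] by simp
  finally have perp_S: "perp p X ?S = K \<inter> L" .
  have "?S \<subseteq> perp p X (K \<inter> L)"
    using subset_perp_perp[of ?S p X] S by (simp add: QpX_submonoid_def perp_S)
  then show "tau_closure p X ?S \<subseteq> perp p X (K \<inter> L)"
    using perp_tau_closed[of "K \<inter> L" p X] KX p by (auto simp: tau_closure_def)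
  show "perp p X (K \<inter> L) \<subseteq> tau_closure p X ?S"
  proof
    fix \<xi> assume \<xi>: "\<xi> \<in> perp p X (K \<inter> L)"
    show "\<xi> \<in> tau_closure p X ?S"
    proof (rule ccontr)
      assume "\<xi> \<notin> tau_closure p X ?S"
      then obtain C where C: "tau_closed p X C" "?S \<subseteq> C" "\<xi> \<notin> C"
        by (auto simp: tau_closure_def)
      moreover have "\<xi> \<in> QpX p X"
        using \<xi> perp_subset_QpX by blast
      ultimately obtain \<eta> where \<eta>: "\<eta> \<in> QpX p X" "\<And>s. s \<in> ?S \<Longrightarrow> pairing p X s \<eta> = 1"
        "pairing p X \<xi> \<eta> \<noteq> 1"
        using exists_dual_separating[OF p X S] by blast
      then have "\<eta> \<in> perp p X ?S"
        by (simp add: perp_def pairing_commute)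
      then have "\<eta> \<in> K \<inter> L"
        by (simp only: perp_S)
      then show False
        using \<xi> \<eta>(3) by (simp add: perp_def)
    qed
  qed
qed

theorem lemma2p8:
  fixes p :: nat and X :: "'a set" and K L :: "('a \<Rightarrow> nat \<Rightarrow> rat) set"
  assumes "prime p" and "countable X"
    and "submodule p X K" and "tau_closed p X K"
    and "submodule p X L" and "tau_closed p X L"
  shows "K = perp p X (perp p X K)
    \<and> (K \<subseteq> L \<longrightarrow> perp p X L \<subseteq> perp p X K)
    \<and> perp p X (setsum_QpX p K L) = perp p X K \<inter> perp p X L
    \<and> perp p X (K \<inter> L) = tau_closure p X (setsum_QpX p (perp p X K) (perp p X L))"
proof -
  have p: "p > 0"
    using assms(1) prime_gt_0_nat by blast
  have K: "QpX_submonoid p X K" and L: "QpX_submonoid p X L"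
    using assms(3,5) by (simp_all add: submodule_QpX_submonoid)
  show ?thesis
    using perp_perp_eq[OF p assms(2) K assms(4)] perp_antimono[of K L p X] perp_setsum[OF K L p]
      perp_Int_eq_closure[OF p assms(2) K assms(4) L assms(6)]
    by simp
qed

end
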